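(* For every integer $k$ (with the polynomial extension described in the context), the following identities of formal power series in $x,y$ hold: $$C^\bullet_k=C^\bullet_{k-1}\,e^{C^\bullet_{k-1}+C^\times_{k-1}},\qquad C^\times_k=e^{C^\bullet_{k-1}}\big(e^{C^\times_{k-1}}-1\big),$$ $$C_k=\exp\big(C^\bullet_k+C^\times_k\big)-1,\qquad C^\ell_{k-1}=C^\bullet_k+C^\times_k.$$
   Context: Let $V_1,V_2$ be disjoint finite sets, $V=V_1\sqcup V_2$. A semi-pointed partition of $(V_1,V_2)$ is a set partition of $V$ into nonempty blocks in which each block $B$ is either unpointed or pointed at one chosen element of $B\cap V_1$, subject to: a block contained in $V_1$ must be pointed, and a block contained in $V_2$ must be unpointed. $\Pi(V_1,V_2)$ is the set of semi-pointed partitions, ordered by: $P\le Q$ iff every block $b$ of $P$ is a union $q_1\cup\dots\cup q_r$ of blocks of $Q$, and if $b$ is pointed at $e$ then some $q_i$ is pointed at $e$, while if $b$ is unpointed then some $q_i$ is unpointed. Its greatest element $\hat1$ is the partition into singletons. Its minimal elements are $m_v$, $v\in V_1$ (the block $V$ pointed at $v$), and, if $V_2\neq\emptyset$, $m_\times$ (the unpointed block $V$). For $k\ge1$ and $|V_1|=p$, $|V_2|=q$: - $c_k(p,q)$ is the number of $k$-multichains $a_1\le\dots\le a_k$ in $\Pi(V_1,V_2)$, for $(p,q)\neq(0,0)$; - $c^\bullet_k(p,q)$ is the number of those with $a_1=m_v$ for some $v$; - $c^\times_k(p,q)$ is the number of those with $a_1=m_\times$; - $c^\ell_k(p,q)$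 is $\sum_m$ (number of $k$-multichains in $[m,\hat1]$), the sum over all minimal $m$. For fixed $(p,q)$ each of these is a polynomial function of $k\ge1$, and it is extended to all integers $k$ by that polynomial. Define $C_k(x,y)=\sum_{(p,q)\neq(0,0)}c_k(p,q)\frac{x^py^q}{p!q!}$, and similarly $C^\bullet_k$, $C^\times_k$, $C^\ell_k$ from $c^\bullet_k$, $c^\times_k$, $c^\ell_k$. *)

theory Defs
  imports "HOL-Computational_Algebra.Polynomial"
begin

text \<open>A semi-pointed partition is represented as a set of pairs (B, w) where B is a
block and o is None (unpointed) or Some e (pointed at e).\<close>

type_synonym 'a sppart = "('a set \<times> 'a option) set"

definition semi_pointed :: "'a set \<Rightarrow> 'a set \<Rightarrow> 'a sppart \<Rightarrow> bool" where
  "semi_pointed V1 V2 P \<longleftrightarrow>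
     (\<forall>(B, w) \<in> P. B \<noteq> {}
        \<and> (\<forall>e. w = Some e \<longrightarrow> e \<in> B \<inter> V1)
        \<and> (B \<subseteq> V1 \<longrightarrow> w \<noteq> None)
        \<and> (B \<subseteq> V2 \<longrightarrow> w = None))
   \<and> (\<forall>(B, w) \<in> P. \<forall>(B', w') \<in> P. B = B' \<longrightarrow> w = w')
   \<and> (\<forall>(B, w) \<in> P. \<forall>(B', w') \<in> P. B \<noteq> B' \<longrightarrow> B \<inter> B' = {})
   \<and> \<Union>(fst ` P) = V1 \<union> V2"

definition SPi :: "'a set \<Rightarrow> 'a set \<Rightarrow> 'a sppart set" where
  "SPi V1 V2 = {P. semi_pointed V1 V2 P}"

definition sp_le :: "'a sppart \<Rightarrow> 'a sppart \<Rightarrow> bool" where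
  "sp_le P Q \<longleftrightarrow>
     (\<forall>(b, w) \<in> P. \<exists>S \<subseteq> Q. b = \<Union>(fst ` S) \<and>
        (case w of Some e \<Rightarrow> (\<exists>q. (q, Some e) \<in> S) | None \<Rightarrow> (\<exists>q. (q, None) \<in> S)))"

definition sp_top :: "'a set \<Rightarrow> 'a set \<Rightarrow> 'a sppart" where
  "sp_top V1 V2 = (\<lambda>v. ({v}, if v \<in> V1 then Some v else None)) ` (V1 \<union> V2)"

definition m_pt :: "'a set \<Rightarrow> 'a set \<Rightarrow> 'a \<Rightarrow> 'a sppart" where
  "m_pt V1 V2 v = {(V1 \<union> V2, Some v)}"

definition m_cross :: "'a set \<Rightarrow> 'a set \<Rightarrow> 'a sppart" where
  "m_cross V1 V2 = {(V1 \<union> V2, None)}"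

definition sp_minimals :: "'a set \<Rightarrow> 'a set \<Rightarrow> 'a sppart set" where
  "sp_minimals V1 V2 = m_pt V1 V2 ` V1 \<union> (if V2 \<noteq> {} then {m_cross V1 V2} else {})"

definition multichains_in :: "'a sppart set \<Rightarrow> nat \<Rightarrow> 'a sppart list set" where
  "multichains_in S k = {as. length as = k \<and> set as \<subseteq> S \<and>
      (\<forall>i. Suc i < k \<longrightarrow> sp_le (as ! i) (as ! Suc i))}"

definition V1c :: "nat \<Rightarrow> nat set" where "V1c p = {..<p}"
definition V2c :: "nat \<Rightarrow> nat \<Rightarrow> nat set" where "V2c p q = {p..<p+q}"

definition cnt :: "nat \<Rightarrow> nat \<Rightarrow> nat \<Rightarrow> nat" where
  "cnt p q k = card (multichains_in (SPi (V1c p) (V2c p q)) k)"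

definition cnt_bullet :: "nat \<Rightarrow> nat \<Rightarrow> nat \<Rightarrow> nat" where
  "cnt_bullet p q k = card {as \<in> multichains_in (SPi (V1c p) (V2c p q)) k.
      \<exists>v \<in> V1c p. hd as = m_pt (V1c p) (V2c p q) v}"

definition cnt_cross :: "nat \<Rightarrow> nat \<Rightarrow> nat \<Rightarrow> nat" where
  "cnt_cross p q k = card {as \<in> multichains_in (SPi (V1c p) (V2c p q)) k.
      hd as = m_cross (V1c p) (V2c p q)}"

definition sp_interval :: "'a set \<Rightarrow> 'a set \<Rightarrow> 'a sppart \<Rightarrow> 'a sppart \<Rightarrow> 'a sppart set" where
  "sp_interval V1 V2 a b = {x \<in> SPi V1 V2. sp_le a x \<and> sp_le x b}"

definition cnt_ell :: "nat \<Rightarrow> nat \<Rightarrow> nat \<Rightarrow> nat" where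
  "cnt_ell p q k = (\<Sum>m \<in> sp_minimals (V1c p) (V2c p q).
      card (multichains_in (sp_interval (V1c p) (V2c p q) m (sp_top (V1c p) (V2c p q))) k))"

text \<open>Polynomial extension: the value at an integer k of the (unique) polynomial
that agrees with f on all k \<ge> 1.\<close>

definition poly_ext :: "(nat \<Rightarrow> nat) \<Rightarrow> int \<Rightarrow> rat" where
  "poly_ext f k = (THE v. \<exists>P :: rat poly.
      (\<forall>n \<ge> 1. poly P (of_nat n) = of_nat (f n)) \<and> v = poly P (of_int k))"

type_synonym bser = "nat \<Rightarrow> nat \<Rightarrow> rat"  \<comment> \<open>F p q = coefficient of x^p y^q\<close>

definition badd :: "bser \<Rightarrow> bser \<Rightarrow> bser" where
  "badd F G = (\<lambda>p q. F p q + G p q)"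

definition bsub :: "bser \<Rightarrow> bser \<Rightarrow> bser" where
  "bsub F G = (\<lambda>p q. F p q - G p q)"

definition bone :: bser where
  "bone = (\<lambda>p q. if p = 0 \<and> q = 0 then 1 else 0)"

definition bmul :: "bser \<Rightarrow> bser \<Rightarrow> bser" where
  "bmul F G = (\<lambda>p q. \<Sum>i\<le>p. \<Sum>j\<le>q. F i j * G (p - i) (q - j))"

fun bpow :: "bser \<Rightarrow> nat \<Rightarrow> bser" where
  "bpow F 0 = bone"
| "bpow F (Suc n) = bmul F (bpow F n)"

text \<open>exp(F) = sum_n F^n / n!, for F with zero constant term (then only n \<le> p+q
contribute to the coefficient of x^p y^q).\<close>

definition bexp :: "bser \<Rightarrow> bser" where
  "bexp F = (\<lambda>p q. \<Sum>n\<le>p+q. bpow F n p q / fact n)"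

definition egf :: "(nat \<Rightarrow> nat \<Rightarrow> rat) \<Rightarrow> bser" where
  "egf a = (\<lambda>p q. if p = 0 \<and> q = 0 then 0 else a p q / (fact p * fact q))"

definition Cser :: "int \<Rightarrow> bser" where
  "Cser k = egf (\<lambda>p q. poly_ext (\<lambda>n. cnt p q n) k)"

definition Cbullet :: "int \<Rightarrow> bser" where
  "Cbullet k = egf (\<lambda>p q. poly_ext (\<lambda>n. cnt_bullet p q n) k)"

definition Ccross :: "int \<Rightarrow> bser" where
  "Ccross k = egf (\<lambda>p q. poly_ext (\<lambda>n. cnt_cross p q n) k)"

definition Cell :: "int \<Rightarrow> bser" where
  "Cell k = egf (\<lambda>p q. poly_ext (\<lambda>n. cnt_ell p q n) k)"

end

theory Submission
  imports Defs "HOL-Library.FuncSet" "HOL-Computational_Algebra.Formal_Power_Series"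
begin

text \<open>
  Restricting to the blocks of a semi-pointed partition Q, and gluing back, identifies the
  multichains starting at Q with families of multichains, one for each block of Q, starting at the
  one-block partition of that block. So for fixed k the number of k-multichains is a sum over
  partitions of a product of block weights, the weight of a block being the number of
  k-multichains starting at a minimal element of its own poset, and the exponential formula gives
  \<open>C\<^sub>k = exp (C\<^sup>\<bullet>\<^sub>k + C\<^sup>\<times>\<^sub>k) - 1\<close>.
  A (k+1)-multichain starting at \<open>m\<^sub>v\<close> (resp. \<open>m\<^sub>\<times>\<close>) is \<open>m\<^sub>v\<close> (resp. \<open>m\<^sub>\<times>\<close>)
  followed by a k-multichain whose first element has a block pointed at v (resp. an unpointed
  block); isolating that block (resp. the union of the unpointed blocks) gives the recursions for
  \<open>C\<^sup>\<bullet>\<close> and \<open>C\<^sup>\<times>\<close>. Dropping the minimal element m identifies the k-multichains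
  of the interval above m with the (k+1)-multichains starting at m, which gives \<open>C\<^sup>l\<close>.
  Finally every count is a polynomial in k (finite differences, by induction on up-sets), so the
  coefficientwise identities, valid for k \<ge> 2, hold for all integers k.
\<close>

section \<open>Semi-pointed partitions\<close>

lemma mem_SPi_iff: "P \<in> SPi V1 V2 \<longleftrightarrow> semi_pointed V1 V2 P"
  by (simp add: SPi_def)

lemma semi_pointed_iff:
  "semi_pointed V1 V2 P \<longleftrightarrow>
     (\<forall>B w. (B, w) \<in> P \<longrightarrow> B \<noteq> {} \<and> (\<forall>e. w = Some e \<longrightarrow> e \<in> B \<and> e \<in> V1)
        \<and> (B \<subseteq> V1 \<longrightarrow> w \<noteq> None) \<and> (B \<subseteq> V2 \<longrightarrow> w = None))
   \<and> (\<forall>B w B' w'. (B, w) \<in> P \<longrightarrow> (B', w') \<in> P \<longrightarrow> B = B' \<longrightarrow> w = w')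
   \<and> (\<forall>B w B' w'. (B, w) \<in> P \<longrightarrow> (B', w') \<in> P \<longrightarrow> B \<noteq> B' \<longrightarrow> B \<inter> B' = {})
   \<and> \<Union>(fst ` P) = V1 \<union> V2"
  unfolding semi_pointed_def Ball_def split_paired_All by simp

lemma sp_block_nonempty: "semi_pointed V1 V2 P \<Longrightarrow> (B, w) \<in> P \<Longrightarrow> B \<noteq> {}"
  unfolding semi_pointed_iff by simp

lemma sp_point_in_block: "semi_pointed V1 V2 P \<Longrightarrow> (B, Some e) \<in> P \<Longrightarrow> e \<in> B \<and> e \<in> V1"
  unfolding semi_pointed_iff by simp

lemma sp_block_in_V1_pointed: "semi_pointed V1 V2 P \<Longrightarrow> (B, w) \<in> P \<Longrightarrow> B \<subseteq> V1 \<Longrightarrow> w \<noteq> None"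
  unfolding semi_pointed_iff by simp

lemma sp_block_in_V2_unpointed: "semi_pointed V1 V2 P \<Longrightarrow> (B, w) \<in> P \<Longrightarrow> B \<subseteq> V2 \<Longrightarrow> w = None"
  unfolding semi_pointed_iff by simp

lemma sp_Union_blocks: "semi_pointed V1 V2 P \<Longrightarrow> \<Union>(fst ` P) = V1 \<union> V2"
  unfolding semi_pointed_iff by simp

lemma sp_block_subset: "semi_pointed V1 V2 P \<Longrightarrow> (B, w) \<in> P \<Longrightarrow> B \<subseteq> V1 \<union> V2"
  using sp_Union_blocks by fastforce

lemma sp_blocks_eq:
  assumes "semi_pointed V1 V2 P" "(B, w) \<in> P" "(B', w') \<in> P" "x \<in> B" "x \<in> B'"
  shows "B = B' \<and> w = w'"
  using assms unfolding semi_pointed_iff by blast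

lemma sp_blockE:
  assumes "semi_pointed V1 V2 P" "x \<in> V1 \<union> V2"
  obtains B w where "(B, w) \<in> P" "x \<in> B"
  using assms sp_Union_blocks by fastforce

lemma sp_distinct_blocks_disjoint:
  "semi_pointed V1 V2 P \<Longrightarrow> y \<in> P \<Longrightarrow> y' \<in> P \<Longrightarrow> y \<noteq> y' \<Longrightarrow> fst y \<inter> fst y' = {}"
  using sp_blocks_eq by (cases y, cases y') fastforce

lemma semi_pointedI:
  assumes "\<And>B w. (B, w) \<in> P \<Longrightarrow> B \<noteq> {}"
    and "\<And>B e. (B, Some e) \<in> P \<Longrightarrow> e \<in> B \<and> e \<in> V1"
    and "\<And>B w. (B, w) \<in> P \<Longrightarrow> B \<subseteq> V1 \<Longrightarrow> w \<noteq> None"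
    and "\<And>B w. (B, w) \<in> P \<Longrightarrow> B \<subseteq> V2 \<Longrightarrow> w = None"
    and "\<And>B w B' w' x. (B, w) \<in> P \<Longrightarrow> (B', w') \<in> P \<Longrightarrow> x \<in> B \<Longrightarrow> x \<in> B' \<Longrightarrow> B = B' \<and> w = w'"
    and "\<Union>(fst ` P) = V1 \<union> V2"
  shows "semi_pointed V1 V2 P"
  unfolding semi_pointed_iff
proof (intro conjI allI impI)
  fix B w B' w' assume "(B, w) \<in> P" "(B', w') \<in> P" "B = B'"
  moreover obtain x where "x \<in> B" using assms(1) \<open>(B, w) \<in> P\<close> by blast
  ultimately show "w = w'" using assms(5) by blast
next
  fix B w B' w' assume "(B, w) \<in> P" "(B', w') \<in> P" "B \<noteq> B'"
  then show "B \<inter> B' = {}" using assms(5) by blast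
qed (use assms in blast)+

lemma semi_pointed_subset_Pow:
  assumes "semi_pointed V1 V2 P"
  shows "P \<subseteq> Pow (V1 \<union> V2) \<times> insert None (Some ` V1)"
proof
  fix y assume "y \<in> P"
  then obtain B w where y: "y = (B, w)" "(B, w) \<in> P" by (cases y) auto
  have "w \<in> insert None (Some ` V1)"
    using sp_point_in_block[OF assms, of B] y(2) by (cases w) auto
  then show "y \<in> Pow (V1 \<union> V2) \<times> insert None (Some ` V1)"
    using sp_block_subset[OF assms y(2)] y(1) by auto
qed

lemma finite_SPi:
  assumes "finite V1" "finite V2"
  shows "finite (SPi V1 V2)"
proof (rule finite_subset)
  show "SPi V1 V2 \<subseteq> Pow (Pow (V1 \<union> V2) \<times> insert None (Some ` V1))"
    unfolding SPi_def using semi_pointed_subset_Pow by blast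
qed (use assms in simp)

lemma semi_pointed_finite:
  assumes "finite V1" "finite V2" "semi_pointed V1 V2 P"
  shows "finite P"
  using semi_pointed_subset_Pow[OF assms(3)] assms(1,2) finite_subset by fastforce

text \<open>A block-wise form of \<open>sp_le\<close>: equivalent to it on semi-pointed partitions
  (\<open>sp_le_iff_alt\<close>), and transitive for trivial reasons.\<close>

definition sp_le_alt :: "'a sppart \<Rightarrow> 'a sppart \<Rightarrow> bool" where
  "sp_le_alt P R \<longleftrightarrow> (\<forall>c u. (c, u) \<in> R \<longrightarrow> (\<exists>b w. (b, w) \<in> P \<and> c \<subseteq> b)) \<and>
     (\<forall>b e. (b, Some e) \<in> P \<longrightarrow> (\<exists>c. (c, Some e) \<in> R)) \<and>
     (\<forall>b. (b, None) \<in> P \<longrightarrow> (\<exists>c. (c, None) \<in> R \<and> c \<subseteq> b))"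

lemma sp_le_alt_block_below: "sp_le_alt P R \<Longrightarrow> (c, u) \<in> R \<Longrightarrow> \<exists>b w. (b, w) \<in> P \<and> c \<subseteq> b"
  unfolding sp_le_alt_def by blast

lemma sp_le_alt_point: "sp_le_alt P R \<Longrightarrow> (b, Some e) \<in> P \<Longrightarrow> \<exists>c. (c, Some e) \<in> R"
  unfolding sp_le_alt_def by blast

lemma sp_le_alt_unpointed: "sp_le_alt P R \<Longrightarrow> (b, None) \<in> P \<Longrightarrow> \<exists>c. (c, None) \<in> R \<and> c \<subseteq> b"
  unfolding sp_le_alt_def by blast

lemma sp_le_altI:
  assumes "\<And>c u. (c, u) \<in> R \<Longrightarrow> \<exists>b w. (b, w) \<in> P \<and> c \<subseteq> b"
    and "\<And>b e. (b, Some e) \<in> P \<Longrightarrow> \<exists>c. (c, Some e) \<in> R"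
    and "\<And>b. (b, None) \<in> P \<Longrightarrow> \<exists>c. (c, None) \<in> R \<and> c \<subseteq> b"
  shows "sp_le_alt P R"
  unfolding sp_le_alt_def using assms by blast

lemma sp_le_alt_refl: "sp_le_alt P P"
  by (rule sp_le_altI) auto

lemma sp_le_alt_trans:
  assumes "sp_le_alt P Q" "sp_le_alt Q R"
  shows "sp_le_alt P R"
proof (rule sp_le_altI)
  fix c u assume "(c, u) \<in> R"
  then obtain b w where "(b, w) \<in> Q" "c \<subseteq> b" using sp_le_alt_block_below[OF assms(2)] by blast
  moreover then obtain b' w' where "(b', w') \<in> P" "b \<subseteq> b'"
    using sp_le_alt_block_below[OF assms(1)] by blast
  ultimately show "\<exists>b w. (b, w) \<in> P \<and> c \<subseteq> b" by (meson order_trans)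
next
  fix b e assume "(b, Some e) \<in> P"
  then obtain c where "(c, Some e) \<in> Q" using sp_le_alt_point[OF assms(1)] by blast
  then show "\<exists>c. (c, Some e) \<in> R" using sp_le_alt_point[OF assms(2)] by blast
next
  fix b assume "(b, None) \<in> P"
  then obtain c where "(c, None) \<in> Q" "c \<subseteq> b" using sp_le_alt_unpointed[OF assms(1)] by blast
  moreover then obtain c' where "(c', None) \<in> R" "c' \<subseteq> c"
    using sp_le_alt_unpointed[OF assms(2)] by blast
  ultimately show "\<exists>c. (c, None) \<in> R \<and> c \<subseteq> b" by (meson order_trans)
qed

lemma sp_le_alt_block_subset:
  assumes sP: "semi_pointed V1 V2 P" and le: "sp_le_alt P R"
    and bw: "(b, w) \<in> P" and cu: "(c, u) \<in> R" and x: "x \<in> c" "x \<in> b"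
  shows "c \<subseteq> b"
proof -
  obtain b' w' where b': "(b', w') \<in> P" "c \<subseteq> b'" using sp_le_alt_block_below[OF le cu] by blast
  have "b = b'" using sp_blocks_eq[OF sP bw b'(1) x(2)] b'(2) x(1) by blast
  then show ?thesis using b' by simp
qed

lemma sp_le_alt_cover:
  assumes sP: "semi_pointed V1 V2 P" and sR: "semi_pointed V1 V2 R" and le: "sp_le_alt P R"
    and bw: "(b, w) \<in> P"
  shows "b = \<Union>(fst ` {y \<in> R. fst y \<subseteq> b})"
proof
  show "b \<subseteq> \<Union>(fst ` {y \<in> R. fst y \<subseteq> b})"
  proof
    fix x assume x: "x \<in> b"
    then have "x \<in> V1 \<union> V2" using sp_block_subset[OF sP bw] by blast
    then obtain c u where cu: "(c, u) \<in> R" "x \<in> c" using sp_blockE[OF sR] by blast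
    have "c \<subseteq> b" using sp_le_alt_block_subset[OF sP le bw cu(1) cu(2) x] .
    then show "x \<in> \<Union>(fst ` {y \<in> R. fst y \<subseteq> b})" using cu by force
  qed
qed blast

lemma sp_le_iff_blockwise: "sp_le P R \<longleftrightarrow> (\<forall>b w. (b, w) \<in> P \<longrightarrow> (\<exists>S\<subseteq>R. b = \<Union>(fst ` S) \<and>
      (case w of Some e \<Rightarrow> (\<exists>q. (q, Some e) \<in> S) | None \<Rightarrow> (\<exists>q. (q, None) \<in> S))))"
  unfolding sp_le_def Ball_def split_paired_All by simp

lemma sp_leE:
  assumes "sp_le P R" "(b, w) \<in> P"
  obtains S where "S \<subseteq> R" "b = \<Union>(fst ` S)"
    "case w of Some e \<Rightarrow> (\<exists>q. (q, Some e) \<in> S) | None \<Rightarrow> (\<exists>q. (q, None) \<in> S)"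
  using assms(1)[unfolded sp_le_iff_blockwise, rule_format, OF assms(2)] by blast

lemma sp_leI:
  "(\<And>b w. (b, w) \<in> P \<Longrightarrow> \<exists>S\<subseteq>R. b = \<Union>(fst ` S) \<and>
      (case w of Some e \<Rightarrow> (\<exists>q. (q, Some e) \<in> S) | None \<Rightarrow> (\<exists>q. (q, None) \<in> S))) \<Longrightarrow> sp_le P R"
  unfolding sp_le_iff_blockwise by blast

lemma sp_le_imp_sp_le_alt:
  assumes sP: "semi_pointed V1 V2 P" and sR: "semi_pointed V1 V2 R" and le: "sp_le P R"
  shows "sp_le_alt P R"
proof (rule sp_le_altI)
  fix c u assume cu: "(c, u) \<in> R"
  obtain x where x: "x \<in> c" using sp_block_nonempty[OF sR cu] by blast
  have "x \<in> V1 \<union> V2" using sp_block_subset[OF sR cu] x by blast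
  then obtain b w where bw: "(b, w) \<in> P" "x \<in> b" using sp_blockE[OF sP] by blast
  then obtain S where S: "S \<subseteq> R" "b = \<Union>(fst ` S)" using sp_leE[OF le] by metis
  then obtain c' u' where c': "(c', u') \<in> S" "x \<in> c'" using bw(2) by force
  have "c = c'" using sp_blocks_eq[OF sR cu _ x, of c' u'] c' S(1) by auto
  then have "c \<subseteq> b" using S(2) c' by force
  then show "\<exists>b w. (b, w) \<in> P \<and> c \<subseteq> b" using bw(1) by blast
next
  fix b e assume "(b, Some e) \<in> P"
  then show "\<exists>c. (c, Some e) \<in> R" by (elim sp_leE[OF le]) auto
next
  fix b assume "(b, None) \<in> P"
  then obtain S q where S: "S \<subseteq> R" "b = \<Union>(fst ` S)" "(q, None) \<in> S"
    by (elim sp_leE[OF le]) auto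
  then have "q \<subseteq> b" by force
  then show "\<exists>c. (c, None) \<in> R \<and> c \<subseteq> b" using S by blast
qed

lemma sp_le_alt_imp_sp_le:
  assumes sP: "semi_pointed V1 V2 P" and sR: "semi_pointed V1 V2 R" and le: "sp_le_alt P R"
  shows "sp_le P R"
proof (rule sp_leI)
  fix b w assume bw: "(b, w) \<in> P"
  let ?S = "{y \<in> R. fst y \<subseteq> b}"
  have "case w of None \<Rightarrow> \<exists>q. (q, None) \<in> ?S | Some e \<Rightarrow> \<exists>q. (q, Some e) \<in> ?S"
  proof (cases w)
    case None
    then obtain c where "(c, None) \<in> R" "c \<subseteq> b" using sp_le_alt_unpointed[OF le] bw by blast
    then show ?thesis using None by auto
  next
    case (Some e)
    then obtain c where c: "(c, Some e) \<in> R" using sp_le_alt_point[OF le] bw by blast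
    have "e \<in> c" "e \<in> b" using sp_point_in_block[OF sR c] sp_point_in_block[OF sP] bw Some by auto
    then have "c \<subseteq> b" using sp_le_alt_block_subset[OF sP le bw c] by blast
    then show ?thesis using Some c by auto
  qed
  then show "\<exists>S\<subseteq>R. b = \<Union>(fst ` S) \<and>
      (case w of Some e \<Rightarrow> \<exists>q. (q, Some e) \<in> S | None \<Rightarrow> \<exists>q. (q, None) \<in> S)"
    using sp_le_alt_cover[OF sP sR le bw] by (intro exI[of _ ?S]) auto
qed

lemma sp_le_iff_alt:
  "semi_pointed V1 V2 P \<Longrightarrow> semi_pointed V1 V2 R \<Longrightarrow> sp_le P R \<longleftrightarrow> sp_le_alt P R"
  using sp_le_imp_sp_le_alt sp_le_alt_imp_sp_le by blast

lemma sp_le_alt_antisym: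
  assumes sP: "semi_pointed V1 V2 P" and sR: "semi_pointed V1 V2 R"
    and PR: "sp_le_alt P R" and RP: "sp_le_alt R P"
  shows "P = R"
proof -
  have "y \<in> Q2" if sQ1: "semi_pointed V1 V2 Q1" and sQ2: "semi_pointed V1 V2 Q2"
    and l1: "sp_le_alt Q1 Q2" and l2: "sp_le_alt Q2 Q1" and y: "y \<in> Q1" for Q1 Q2 y
  proof -
    obtain b w where bw: "y = (b, w)" "(b, w) \<in> Q1" using y by (cases y) auto
    obtain x where x: "x \<in> b" using sp_block_nonempty[OF sQ1 bw(2)] by blast
    have "x \<in> V1 \<union> V2" using sp_block_subset[OF sQ1 bw(2)] x by blast
    then obtain c u where cu: "(c, u) \<in> Q2" "x \<in> c" using sp_blockE[OF sQ2] by blast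
    have bc: "b = c"
      using sp_le_alt_block_subset[OF sQ1 l1 bw(2) cu x] sp_le_alt_block_subset[OF sQ2 l2 cu(1) bw(2) x cu(2)]
      by blast
    have "u = w"
    proof (cases w)
      case None
      then obtain c1 where c1: "(c1, None) \<in> Q2" "c1 \<subseteq> b" using sp_le_alt_unpointed[OF l1] bw by blast
      obtain z where "z \<in> c1" using sp_block_nonempty[OF sQ2 c1(1)] by blast
      then show ?thesis using sp_blocks_eq[OF sQ2 cu(1) c1(1)] c1(2) bc None by blast
    next
      case (Some e)
      then obtain c1 where c1: "(c1, Some e) \<in> Q2" using sp_le_alt_point[OF l1] bw by blast
      have "e \<in> c1" "e \<in> b" using sp_point_in_block[OF sQ2 c1] sp_point_in_block[OF sQ1] bw Some by auto
      then show ?thesis using sp_blocks_eq[OF sQ2 cu(1) c1] bc Some by blast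
    qed
    then show ?thesis using cu(1) bc bw(1) by simp
  qed
  then show ?thesis using sP sR PR RP by blast
qed

section \<open>Restriction and gluing\<close>

lemma semi_pointed_subpartition:
  assumes sR: "semi_pointed V1 V2 R" and sub: "R' \<subseteq> R" and U: "U = \<Union>(fst ` R')"
  shows "semi_pointed (U \<inter> V1) (U \<inter> V2) R'"
proof (rule semi_pointedI)
  fix B w assume h: "(B, w) \<in> R'"
  then have h': "(B, w) \<in> R" using sub by blast
  show "B \<noteq> {}" using sp_block_nonempty[OF sR h'] .
  show "B \<subseteq> U \<inter> V1 \<Longrightarrow> w \<noteq> None" using sp_block_in_V1_pointed[OF sR h'] by blast
  show "B \<subseteq> U \<inter> V2 \<Longrightarrow> w = None" using sp_block_in_V2_unpointed[OF sR h'] by blast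
next
  fix B e assume h: "(B, Some e) \<in> R'"
  then have "e \<in> B \<and> e \<in> V1" using sp_point_in_block[OF sR] sub by blast
  moreover have "B \<subseteq> U" using h U by (metis Union_upper fst_conv image_eqI)
  ultimately show "e \<in> B \<and> e \<in> U \<inter> V1" by blast
next
  fix B w B' w' x assume "(B, w) \<in> R'" "(B', w') \<in> R'" "x \<in> B" "x \<in> B'"
  then show "B = B' \<and> w = w'" using sp_blocks_eq[OF sR] sub by blast
next
  have "U \<subseteq> V1 \<union> V2" using U sp_Union_blocks[OF sR] sub by blast
  then show "\<Union>(fst ` R') = U \<inter> V1 \<union> U \<inter> V2" using U by blast
qed

lemma semi_pointed_UN:
  assumes G: "\<And>i. i \<in> I \<Longrightarrow> semi_pointed (U i \<inter> V1) (U i \<inter> V2) (G i)"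
    and D: "\<And>i j. i \<in> I \<Longrightarrow> j \<in> I \<Longrightarrow> i \<noteq> j \<Longrightarrow> U i \<inter> U j = {}"
    and C: "\<Union>(U ` I) = V1 \<union> V2"
  shows "semi_pointed V1 V2 (\<Union>i\<in>I. G i)"
proof (rule semi_pointedI)
  have sub: "B \<subseteq> U i" if "i \<in> I" "(B, w) \<in> G i" for i B w
    using sp_block_subset[OF G[OF that(1)] that(2)] by blast
  fix B w assume "(B, w) \<in> (\<Union>i\<in>I. G i)"
  then obtain i where i: "i \<in> I" "(B, w) \<in> G i" by blast
  show "B \<noteq> {}" using sp_block_nonempty[OF G[OF i(1)] i(2)] .
  show "B \<subseteq> V1 \<Longrightarrow> w \<noteq> None" using sp_block_in_V1_pointed[OF G[OF i(1)] i(2)] sub[OF i] by blast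
  show "B \<subseteq> V2 \<Longrightarrow> w = None" using sp_block_in_V2_unpointed[OF G[OF i(1)] i(2)] sub[OF i] by blast
next
  fix B e assume "(B, Some e) \<in> (\<Union>i\<in>I. G i)"
  then obtain i where i: "i \<in> I" "(B, Some e) \<in> G i" by blast
  show "e \<in> B \<and> e \<in> V1" using sp_point_in_block[OF G[OF i(1)] i(2)] by blast
next
  fix B w B' w' x
  assume h: "(B, w) \<in> (\<Union>i\<in>I. G i)" "(B', w') \<in> (\<Union>i\<in>I. G i)" "x \<in> B" "x \<in> B'"
  then obtain i j where i: "i \<in> I" "(B, w) \<in> G i" and j: "j \<in> I" "(B', w') \<in> G j" by blast
  have "x \<in> U i" "x \<in> U j"
    using sp_block_subset[OF G[OF i(1)] i(2)] sp_block_subset[OF G[OF j(1)] j(2)] h(3,4) by blast+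
  then have "i = j" using D[OF i(1) j(1)] by blast
  then show "B = B' \<and> w = w'" using sp_blocks_eq[OF G[OF i(1)] i(2)] j(2) h(3,4) by blast
next
  have "\<Union>(fst ` (\<Union>i\<in>I. G i)) = (\<Union>i\<in>I. \<Union>(fst ` G i))" by blast
  also have "\<dots> = (\<Union>i\<in>I. U i \<inter> V1 \<union> U i \<inter> V2)" using sp_Union_blocks[OF G] by simp
  also have "\<dots> = V1 \<union> V2" using C by blast
  finally show "\<Union>(fst ` (\<Union>i\<in>I. G i)) = V1 \<union> V2" .
qed

text \<open>Restricting a partition finer than Q to a block b of Q, and gluing partitions of the
  blocks of Q, are mutually inverse; this is the source of the product formula for chains.\<close>

definition sp_restrict :: "'a set \<Rightarrow> 'a sppart \<Rightarrow> 'a sppart" where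
  "sp_restrict b R = {y \<in> R. fst y \<subseteq> b}"

lemma semi_pointed_sp_restrict:
  assumes sQ: "semi_pointed V1 V2 Q" and sR: "semi_pointed V1 V2 R" and le: "sp_le_alt Q R"
    and bw: "(b, w) \<in> Q"
  shows "semi_pointed (b \<inter> V1) (b \<inter> V2) (sp_restrict b R)"
  using semi_pointed_subpartition[OF sR, of "sp_restrict b R" b] sp_le_alt_cover[OF sQ sR le bw]
  unfolding sp_restrict_def by blast

lemma sp_restrict_block:
  assumes sQ: "semi_pointed V1 V2 Q" and bw: "(b, w) \<in> Q"
  shows "sp_restrict b Q = {(b, w)}"
proof
  show "sp_restrict b Q \<subseteq> {(b, w)}"
  proof
    fix y assume y: "y \<in> sp_restrict b Q"
    obtain c u where cu: "y = (c, u)" "(c, u) \<in> Q" "c \<subseteq> b"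
      using y unfolding sp_restrict_def by (cases y) auto
    obtain x where "x \<in> c" using sp_block_nonempty[OF sQ cu(2)] by blast
    then show "y \<in> {(b, w)}" using sp_blocks_eq[OF sQ cu(2) bw] cu by blast
  qed
qed (use bw in \<open>simp add: sp_restrict_def\<close>)

lemma sp_restrict_UN:
  assumes le: "sp_le_alt Q R"
  shows "(\<Union>y\<in>Q. sp_restrict (fst y) R) = R"
proof
  show "R \<subseteq> (\<Union>y\<in>Q. sp_restrict (fst y) R)"
  proof
    fix x assume x: "x \<in> R"
    obtain c u where cu: "x = (c, u)" by (cases x)
    obtain b w where "(b, w) \<in> Q" "c \<subseteq> b" using sp_le_alt_block_below[OF le] x cu by blast
    then show "x \<in> (\<Union>y\<in>Q. sp_restrict (fst y) R)" using x cu unfolding sp_restrict_def by force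
  qed
qed (auto simp: sp_restrict_def)

lemma sp_le_alt_sp_restrict:
  assumes sQ: "semi_pointed V1 V2 Q" and sR: "semi_pointed V1 V2 R" and sR': "semi_pointed V1 V2 R'"
    and l1: "sp_le_alt Q R" and l2: "sp_le_alt R R'" and bw: "(b, w) \<in> Q"
  shows "sp_le_alt (sp_restrict b R) (sp_restrict b R')"
proof (rule sp_le_altI)
  fix c' u' assume "(c', u') \<in> sp_restrict b R'"
  then have h: "(c', u') \<in> R'" "c' \<subseteq> b" unfolding sp_restrict_def by auto
  obtain c u where cu: "(c, u) \<in> R" "c' \<subseteq> c" using sp_le_alt_block_below[OF l2 h(1)] by blast
  obtain x where x: "x \<in> c'" using sp_block_nonempty[OF sR' h(1)] by blast
  have "c \<subseteq> b" using sp_le_alt_block_subset[OF sQ l1 bw cu(1)] x cu(2) h(2) by blast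
  then show "\<exists>b' w. (b', w) \<in> sp_restrict b R \<and> c' \<subseteq> b'" using cu unfolding sp_restrict_def by auto
next
  fix c e assume "(c, Some e) \<in> sp_restrict b R"
  then have h: "(c, Some e) \<in> R" "c \<subseteq> b" unfolding sp_restrict_def by auto
  obtain c' where c': "(c', Some e) \<in> R'" using sp_le_alt_point[OF l2 h(1)] by blast
  have "e \<in> c'" "e \<in> c" using sp_point_in_block[OF sR' c'] sp_point_in_block[OF sR h(1)] by auto
  then have "c' \<subseteq> c" using sp_le_alt_block_subset[OF sR l2 h(1) c'] by blast
  then show "\<exists>c'. (c', Some e) \<in> sp_restrict b R'" using c' h(2) unfolding sp_restrict_def by auto
next
  fix c assume "(c, None) \<in> sp_restrict b R"
  then have h: "(c, None) \<in> R" "c \<subseteq> b" unfolding sp_restrict_def by auto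
  obtain c' where "(c', None) \<in> R'" "c' \<subseteq> c" using sp_le_alt_unpointed[OF l2 h(1)] by blast
  then show "\<exists>c'. (c', None) \<in> sp_restrict b R' \<and> c' \<subseteq> c" using h(2) unfolding sp_restrict_def by auto
qed

lemma semi_pointed_glue:
  assumes sQ: "semi_pointed V1 V2 Q"
    and G: "\<And>y. y \<in> Q \<Longrightarrow> semi_pointed (fst y \<inter> V1) (fst y \<inter> V2) (G y)"
  shows "semi_pointed V1 V2 (\<Union>y\<in>Q. G y)"
  by (rule semi_pointed_UN[OF G sp_distinct_blocks_disjoint[OF sQ] sp_Union_blocks[OF sQ]])

lemma sp_restrict_glue:
  assumes sQ: "semi_pointed V1 V2 Q"
    and G: "\<And>y. y \<in> Q \<Longrightarrow> semi_pointed (fst y \<inter> V1) (fst y \<inter> V2) (G y)"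
    and bw: "(b, w) \<in> Q"
  shows "sp_restrict b (\<Union>y\<in>Q. G y) = G (b, w)"
proof
  show "G (b, w) \<subseteq> sp_restrict b (\<Union>y\<in>Q. G y)"
  proof
    fix x assume x: "x \<in> G (b, w)"
    obtain c u where cu: "x = (c, u)" by (cases x)
    have "c \<subseteq> b" using sp_block_subset[OF G[OF bw]] x cu by fastforce
    then show "x \<in> sp_restrict b (\<Union>y\<in>Q. G y)" using x bw cu unfolding sp_restrict_def by auto
  qed
  show "sp_restrict b (\<Union>y\<in>Q. G y) \<subseteq> G (b, w)"
  proof
    fix x assume x: "x \<in> sp_restrict b (\<Union>y\<in>Q. G y)"
    obtain c u where cu: "x = (c, u)" by (cases x)
    obtain y where y: "y \<in> Q" "(c, u) \<in> G y" "c \<subseteq> b" using x cu unfolding sp_restrict_def by auto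
    obtain z where z: "z \<in> c" using sp_block_nonempty[OF G[OF y(1)] y(2)] by blast
    have "c \<subseteq> fst y" using sp_block_subset[OF G[OF y(1)] y(2)] by blast
    then have "z \<in> fst y" "z \<in> b" using z y(3) by auto
    then have "y = (b, w)" using sp_distinct_blocks_disjoint[OF sQ y(1) bw] by auto
    then show "x \<in> G (b, w)" using y(2) cu by simp
  qed
qed

lemma sp_le_alt_glue:
  assumes L: "\<And>y. y \<in> Q \<Longrightarrow> sp_le_alt (G y) (G' y)"
  shows "sp_le_alt (\<Union>y\<in>Q. G y) (\<Union>y\<in>Q. G' y)"
proof (rule sp_le_altI)
  fix c u assume "(c, u) \<in> (\<Union>y\<in>Q. G' y)"
  then obtain y where y: "y \<in> Q" "(c, u) \<in> G' y" by blast
  obtain b w where "(b, w) \<in> G y" "c \<subseteq> b" using sp_le_alt_block_below[OF L[OF y(1)] y(2)] by blast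
  then show "\<exists>b w. (b, w) \<in> (\<Union>y\<in>Q. G y) \<and> c \<subseteq> b" using y(1) by blast
next
  fix b e assume "(b, Some e) \<in> (\<Union>y\<in>Q. G y)"
  then obtain y where y: "y \<in> Q" "(b, Some e) \<in> G y" by blast
  obtain c where "(c, Some e) \<in> G' y" using sp_le_alt_point[OF L[OF y(1)] y(2)] by blast
  then show "\<exists>c. (c, Some e) \<in> (\<Union>y\<in>Q. G' y)" using y(1) by blast
next
  fix b assume "(b, None) \<in> (\<Union>y\<in>Q. G y)"
  then obtain y where y: "y \<in> Q" "(b, None) \<in> G y" by blast
  obtain c where "(c, None) \<in> G' y" "c \<subseteq> b" using sp_le_alt_unpointed[OF L[OF y(1)] y(2)] by blast
  then show "\<exists>c. (c, None) \<in> (\<Union>y\<in>Q. G' y) \<and> c \<subseteq> b" using y(1) by blast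
qed

section \<open>Multichains and the product formula\<close>

definition chains_from :: "'a sppart set \<Rightarrow> 'a sppart \<Rightarrow> nat \<Rightarrow> 'a sppart list set" where
  "chains_from S x k = {as \<in> multichains_in S k. hd as = x}"

lemma mem_multichains_in_iff: "as \<in> multichains_in S k \<longleftrightarrow> length as = k \<and> set as \<subseteq> S \<and>
    (\<forall>i. Suc i < k \<longrightarrow> sp_le (as ! i) (as ! Suc i))"
  unfolding multichains_in_def by simp

lemma finite_multichains_in: "finite S \<Longrightarrow> finite (multichains_in S k)"
  by (rule finite_subset[OF _ finite_lists_length_eq[of S k]]) (auto simp: mem_multichains_in_iff)

lemma finite_chains_from: "finite S \<Longrightarrow> finite (chains_from S x k)"
  unfolding chains_from_def by (rule finite_subset[OF _ finite_multichains_in]) auto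

lemma chains_from_nth_0: "as \<in> chains_from S x k \<Longrightarrow> k \<ge> 1 \<Longrightarrow> as ! 0 = x"
  unfolding chains_from_def mem_multichains_in_iff by (cases as) auto

lemma chains_from_empty: "x \<notin> S \<Longrightarrow> k \<ge> 1 \<Longrightarrow> chains_from S x k = {}"
  unfolding chains_from_def mem_multichains_in_iff by (auto simp: Suc_le_length_iff)

lemma chains_from_nth:
  assumes as: "as \<in> chains_from (SPi V1 V2) x k" and i: "i < k"
  shows "semi_pointed V1 V2 (as ! i)" and "sp_le_alt x (as ! i)"
    and "Suc i < k \<Longrightarrow> sp_le_alt (as ! i) (as ! Suc i)"
proof -
  have mc: "length as = k" "set as \<subseteq> SPi V1 V2" "\<forall>i. Suc i < k \<longrightarrow> sp_le (as ! i) (as ! Suc i)"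
    "hd as = x"
    using as unfolding chains_from_def mem_multichains_in_iff by auto
  have mem: "semi_pointed V1 V2 (as ! j)" if "j < k" for j
  proof -
    have "as ! j \<in> SPi V1 V2" using nth_mem[of j as] mc(1,2) that by blast
    then show ?thesis by (simp add: mem_SPi_iff)
  qed
  show "semi_pointed V1 V2 (as ! i)" using mem[OF i] .
  have step: "sp_le_alt (as ! j) (as ! Suc j)" if "Suc j < k" for j
    using mc(3) that sp_le_iff_alt[OF mem mem] by simp
  then show "Suc i < k \<Longrightarrow> sp_le_alt (as ! i) (as ! Suc i)" .
  have "sp_le_alt (as ! 0) (as ! i)" using i
  proof (induction i)
    case (Suc i)
    then have "sp_le_alt (as ! 0) (as ! i)" by simp
    then show ?case using step[OF Suc.prems] by (rule sp_le_alt_trans)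
  qed (simp add: sp_le_alt_refl)
  moreover have "as ! 0 = x" using chains_from_nth_0[OF as] i by simp
  ultimately show "sp_le_alt x (as ! i)" by simp
qed

lemma chains_from_Suc:
  assumes x: "x \<in> S" and k: "k \<ge> 1"
  shows "chains_from S x (Suc k) = (\<lambda>(y, bs). x # bs) ` (SIGMA y:{y\<in>S. sp_le x y}. chains_from S y k)"
proof
  show "chains_from S x (Suc k) \<subseteq> (\<lambda>(y, bs). x # bs) ` (SIGMA y:{y\<in>S. sp_le x y}. chains_from S y k)"
  proof
    fix as assume as: "as \<in> chains_from S x (Suc k)"
    then have len: "length as = Suc k" and st: "set as \<subseteq> S" and hd: "hd as = x"
      and ch: "\<forall>i. Suc i < Suc k \<longrightarrow> sp_le (as ! i) (as ! Suc i)"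
      unfolding chains_from_def mem_multichains_in_iff by auto
    obtain bs where bs: "as = x # bs" using len hd by (cases as) auto
    have lbs: "length bs = k" using len bs by simp
    then have bsne: "bs \<noteq> []" using k by auto
    have "sp_le x (hd bs)" using ch[rule_format, of 0] k bs bsne by (simp add: hd_conv_nth)
    moreover have "hd bs \<in> S" using st bs bsne by auto
    moreover have "bs \<in> chains_from S (hd bs) k"
      unfolding chains_from_def mem_multichains_in_iff using lbs st bs ch by auto
    ultimately show "as \<in> (\<lambda>(y, bs). x # bs) ` (SIGMA y:{y\<in>S. sp_le x y}. chains_from S y k)"
      using bs by force
  qed
  show "(\<lambda>(y, bs). x # bs) ` (SIGMA y:{y\<in>S. sp_le x y}. chains_from S y k) \<subseteq> chains_from S x (Suc k)"
  proof
    fix as assume "as \<in> (\<lambda>(y, bs). x # bs) ` (SIGMA y:{y\<in>S. sp_le x y}. chains_from S y k)"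
    then obtain y bs where h: "as = x # bs" "y \<in> S" "sp_le x y" "bs \<in> chains_from S y k" by auto
    have lbs: "length bs = k" and st: "set bs \<subseteq> S" and hb: "hd bs = y"
      and ch: "\<forall>i. Suc i < k \<longrightarrow> sp_le (bs ! i) (bs ! Suc i)"
      using h(4) unfolding chains_from_def mem_multichains_in_iff by auto
    have bsne: "bs \<noteq> []" using lbs k by auto
    have "sp_le (as ! i) (as ! Suc i)" if i: "Suc i < Suc k" for i
    proof (cases i)
      case 0 then show ?thesis using h(1,3) hb bsne by (simp add: hd_conv_nth)
    next
      case (Suc j) then show ?thesis using h(1) ch i by simp
    qed
    then show "as \<in> chains_from S x (Suc k)"
      unfolding chains_from_def mem_multichains_in_iff using h(1) lbs st x by auto
  qed
qed

lemma card_chains_from_Suc: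
  assumes x: "x \<in> S" and k: "k \<ge> 1" and fin: "finite S"
  shows "card (chains_from S x (Suc k)) = (\<Sum>y\<in>{y\<in>S. sp_le x y}. card (chains_from S y k))"
proof -
  have "inj_on (\<lambda>(y, bs). x # bs) (SIGMA y:{y\<in>S. sp_le x y}. chains_from S y k)"
    by (rule inj_onI) (auto simp: chains_from_def)
  then have "card (chains_from S x (Suc k)) = card (SIGMA y:{y\<in>S. sp_le x y}. chains_from S y k)"
    unfolding chains_from_Suc[OF x k] by (rule card_image)
  also have "\<dots> = (\<Sum>y\<in>{y\<in>S. sp_le x y}. card (chains_from S y k))"
    using fin finite_chains_from by (intro card_SigmaI) auto
  finally show ?thesis .
qed

lemma card_multichains_in:
  assumes k: "k \<ge> 1" and fin: "finite S"
  shows "card (multichains_in S k) = (\<Sum>x\<in>S. card (chains_from S x k))"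
proof -
  have "multichains_in S k = (\<Union>x\<in>S. chains_from S x k)"
    using k by (auto simp: chains_from_def mem_multichains_in_iff Suc_le_length_iff)
  also have "card \<dots> = (\<Sum>x\<in>S. card (chains_from S x k))"
    by (rule card_UN_disjoint) (use fin finite_chains_from in \<open>auto simp: chains_from_def\<close>)
  finally show ?thesis .
qed

lemma chains_from_map_sp_restrict:
  assumes sQ: "semi_pointed V1 V2 Q" and as: "as \<in> chains_from (SPi V1 V2) Q k"
    and k: "k \<ge> 1" and bw: "(b, w) \<in> Q"
  shows "map (sp_restrict b) as \<in> chains_from (SPi (b \<inter> V1) (b \<inter> V2)) {(b, w)} k"
proof -
  have len: "length as = k" and hd: "hd as = Q"
    using as unfolding chains_from_def mem_multichains_in_iff by auto
  note nth = chains_from_nth[OF as]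
  note sp = nth(1)
  have res: "semi_pointed (b \<inter> V1) (b \<inter> V2) (sp_restrict b (as ! i))" if "i < k" for i
    using semi_pointed_sp_restrict[OF sQ sp nth(2) bw] that by simp
  have "sp_le (sp_restrict b (as ! i)) (sp_restrict b (as ! Suc i))" if i: "Suc i < k" for i
    using sp_le_alt_sp_restrict[OF sQ sp sp nth(2) nth(3) bw] sp_le_iff_alt[OF res res] i by simp
  moreover have "set (map (sp_restrict b) as) \<subseteq> SPi (b \<inter> V1) (b \<inter> V2)"
    using res len by (auto simp: in_set_conv_nth mem_SPi_iff)
  moreover have "hd (map (sp_restrict b) as) = {(b, w)}"
    using len k hd sp_restrict_block[OF sQ bw] by (cases as) auto
  ultimately show ?thesis using len unfolding chains_from_def mem_multichains_in_iff by simp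
qed

definition restrict_chain :: "'a sppart \<Rightarrow> 'a sppart list \<Rightarrow> 'a set \<times> 'a option \<Rightarrow> 'a sppart list" where
  "restrict_chain Q as = (\<lambda>y\<in>Q. map (sp_restrict (fst y)) as)"

definition glue_chains :: "'a sppart \<Rightarrow> nat \<Rightarrow> ('a set \<times> 'a option \<Rightarrow> 'a sppart list) \<Rightarrow> 'a sppart list" where
  "glue_chains Q k F = map (\<lambda>i. \<Union>y\<in>Q. F y ! i) [0..<k]"

lemma glue_chains_mem:
  assumes sQ: "semi_pointed V1 V2 Q" and k: "k \<ge> 1"
    and F: "\<And>y. y \<in> Q \<Longrightarrow> F y \<in> chains_from (SPi (fst y \<inter> V1) (fst y \<inter> V2)) {y} k"
  shows "glue_chains Q k F \<in> chains_from (SPi V1 V2) Q k"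
proof -
  note nth = chains_from_nth[OF F]
  have sp: "semi_pointed V1 V2 (\<Union>y\<in>Q. F y ! i)" if "i < k" for i
    by (rule semi_pointed_glue[OF sQ nth(1)[OF _ that]])
  have "sp_le (glue_chains Q k F ! i) (glue_chains Q k F ! Suc i)" if i: "Suc i < k" for i
    using sp_le_alt_glue[of Q "\<lambda>y. F y ! i" "\<lambda>y. F y ! Suc i"] nth(3) sp_le_iff_alt[OF sp sp] i
    by (simp add: glue_chains_def)
  moreover have "set (glue_chains Q k F) \<subseteq> SPi V1 V2" using sp by (auto simp: mem_SPi_iff glue_chains_def)
  moreover have "hd (glue_chains Q k F) = Q"
  proof -
    have "F y ! 0 = {y}" if "y \<in> Q" for y using chains_from_nth_0[OF F[OF that] k] .
    then show ?thesis using k by (simp add: glue_chains_def hd_map hd_upt)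
  qed
  ultimately show ?thesis unfolding chains_from_def mem_multichains_in_iff by (simp add: glue_chains_def)
qed

lemma glue_restrict_chain:
  assumes as: "as \<in> chains_from (SPi V1 V2) Q k"
  shows "glue_chains Q k (restrict_chain Q as) = as"
proof (rule nth_equalityI)
  have len: "length as = k" using as unfolding chains_from_def mem_multichains_in_iff by simp
  then show "length (glue_chains Q k (restrict_chain Q as)) = length as" by (simp add: glue_chains_def)
  fix i assume "i < length (glue_chains Q k (restrict_chain Q as))"
  then have i: "i < k" by (simp add: glue_chains_def)
  have "glue_chains Q k (restrict_chain Q as) ! i = (\<Union>y\<in>Q. sp_restrict (fst y) (as ! i))"
    using len i unfolding glue_chains_def restrict_chain_def by (auto intro: SUP_cong)
  then show "glue_chains Q k (restrict_chain Q as) ! i = as ! i"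
    using sp_restrict_UN[OF chains_from_nth(2)[OF as i]] by simp
qed

lemma restrict_glue_chains:
  assumes sQ: "semi_pointed V1 V2 Q"
    and F: "F \<in> (\<Pi>\<^sub>E y\<in>Q. chains_from (SPi (fst y \<inter> V1) (fst y \<inter> V2)) {y} k)"
  shows "restrict_chain Q (glue_chains Q k F) = F"
proof (intro ext)
  fix y
  show "restrict_chain Q (glue_chains Q k F) y = F y"
  proof (cases "y \<in> Q")
    case True
    have G: "semi_pointed (fst y' \<inter> V1) (fst y' \<inter> V2) (F y' ! i)" if "y' \<in> Q" "i < k" for y' i
      using chains_from_nth(1)[of "F y'"] F that by (meson PiE_mem)
    have len: "length (F y) = k" using F True unfolding chains_from_def mem_multichains_in_iff by auto
    show ?thesis
    proof (rule nth_equalityI)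
      fix i assume "i < length (restrict_chain Q (glue_chains Q k F) y)"
      then have i: "i < k" using True by (simp add: restrict_chain_def glue_chains_def)
      have "sp_restrict (fst y) (\<Union>y'\<in>Q. F y' ! i) = F (fst y, snd y) ! i"
        by (rule sp_restrict_glue[OF sQ G]) (use True i in auto)
      then show "restrict_chain Q (glue_chains Q k F) y ! i = F y ! i"
        using True i by (simp add: restrict_chain_def glue_chains_def)
    qed (use True len in \<open>simp add: restrict_chain_def glue_chains_def\<close>)
  qed (use F in \<open>auto simp: restrict_chain_def\<close>)
qed

lemma card_chains_from_eq_prod_blocks:
  assumes fin: "finite V1" "finite V2" and Q: "Q \<in> SPi V1 V2" and k: "k \<ge> 1"
  shows "card (chains_from (SPi V1 V2) Q k)
    = (\<Prod>y\<in>Q. card (chains_from (SPi (fst y \<inter> V1) (fst y \<inter> V2)) {y} k))"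
proof -
  let ?T = "\<lambda>y. chains_from (SPi (fst y \<inter> V1) (fst y \<inter> V2)) {y} k"
  have sQ: "semi_pointed V1 V2 Q" using Q by (simp add: mem_SPi_iff)
  have "bij_betw (restrict_chain Q) (chains_from (SPi V1 V2) Q k) (\<Pi>\<^sub>E y\<in>Q. ?T y)"
  proof (rule bij_betw_byWitness[where f' = "glue_chains Q k"])
    show "restrict_chain Q ` chains_from (SPi V1 V2) Q k \<subseteq> (\<Pi>\<^sub>E y\<in>Q. ?T y)"
      using chains_from_map_sp_restrict[OF sQ _ k] by (fastforce simp: restrict_chain_def)
    show "glue_chains Q k ` (\<Pi>\<^sub>E y\<in>Q. ?T y) \<subseteq> chains_from (SPi V1 V2) Q k"
      using glue_chains_mem[OF sQ k] by (auto dest: PiE_mem)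
  qed (use glue_restrict_chain restrict_glue_chains[OF sQ] in auto)
  then have "card (chains_from (SPi V1 V2) Q k) = card (\<Pi>\<^sub>E y\<in>Q. ?T y)" by (rule bij_betw_same_card)
  also have "\<dots> = (\<Prod>y\<in>Q. card (?T y))" using card_PiE[OF semi_pointed_finite[OF fin sQ]] .
  finally show ?thesis .
qed

section \<open>Weighted sums over partitions\<close>

definition sp_pointings :: "'a set \<Rightarrow> 'a set \<Rightarrow> 'a option set" where
  "sp_pointings W1 W2 = Some ` W1 \<union> (if W2 = {} then {} else {None})"

lemma sum_sp_pointings:
  "finite W1 \<Longrightarrow> (\<Sum>u\<in>sp_pointings W1 W2. g u) = (\<Sum>v\<in>W1. g (Some v)) + (if W2 = {} then 0 else g None)"
  unfolding sp_pointings_def by (subst sum.union_disjoint) (auto simp: sum.reindex)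

lemma semi_pointed_single_block_iff:
  assumes D: "V1 \<inter> V2 = {}"
  shows "semi_pointed V1 V2 {(A, u)} \<longleftrightarrow> A = V1 \<union> V2 \<and> A \<noteq> {} \<and> u \<in> sp_pointings V1 V2"
proof
  assume s: "semi_pointed V1 V2 {(A, u)}"
  have "u \<in> sp_pointings V1 V2"
  proof (cases u)
    case None
    then have "\<not> A \<subseteq> V1" using sp_block_in_V1_pointed[OF s] by blast
    then show ?thesis using None sp_block_subset[OF s] unfolding sp_pointings_def by auto
  next
    case (Some e)
    then show ?thesis using sp_point_in_block[OF s] unfolding sp_pointings_def by auto
  qed
  then show "A = V1 \<union> V2 \<and> A \<noteq> {} \<and> u \<in> sp_pointings V1 V2"
    using sp_Union_blocks[OF s] sp_block_nonempty[OF s] by simp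
next
  assume h: "A = V1 \<union> V2 \<and> A \<noteq> {} \<and> u \<in> sp_pointings V1 V2"
  show "semi_pointed V1 V2 {(A, u)}"
  proof (rule semi_pointedI)
    fix B w assume "(B, w) \<in> {(A, u)}" "B \<subseteq> V1"
    then show "w \<noteq> None" using h D unfolding sp_pointings_def by (auto split: if_splits)
  next
    fix B w assume "(B, w) \<in> {(A, u)}" "B \<subseteq> V2"
    then show "w = None" using h D unfolding sp_pointings_def by (auto split: if_splits)
  qed (use h in \<open>auto simp: sp_pointings_def split: if_splits\<close>)
qed

lemma SPi_empty: "SPi {} {} = {{}}"
  using sp_block_nonempty sp_block_subset by (fastforce simp: mem_SPi_iff intro: semi_pointedI)

definition partition_weight :: "'a set \<Rightarrow> 'a set \<Rightarrow> ('a set \<times> 'a option \<Rightarrow> rat) \<Rightarrow> rat" where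
  "partition_weight V1 V2 \<omega> = (\<Sum>R\<in>SPi V1 V2. \<Prod>y\<in>R. \<omega> y)"

lemma partition_weight_empty: "partition_weight {} {} \<omega> = 1"
  unfolding partition_weight_def SPi_empty by simp

lemma partition_weight_cong:
  assumes "\<And>R y. R \<in> SPi V1 V2 \<Longrightarrow> y \<in> R \<Longrightarrow> \<omega> y = \<omega>' y"
  shows "partition_weight V1 V2 \<omega> = partition_weight V1 V2 \<omega>'"
  unfolding partition_weight_def using assms by (intro sum.cong prod.cong) auto

lemma partition_weight_eq_0:
  assumes fin: "finite V1" "finite V2" and x0: "x0 \<in> V1 \<union> V2"
    and zero: "\<And>R y. R \<in> SPi V1 V2 \<Longrightarrow> y \<in> R \<Longrightarrow> x0 \<in> fst y \<Longrightarrow> \<omega> y = 0"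
  shows "partition_weight V1 V2 \<omega> = 0"
  unfolding partition_weight_def
proof (intro sum.neutral ballI)
  fix R assume R: "R \<in> SPi V1 V2"
  then have sR: "semi_pointed V1 V2 R" by (simp add: mem_SPi_iff)
  obtain B w where Bw: "(B, w) \<in> R" "x0 \<in> B" using sp_blockE[OF sR x0] .
  have "\<omega> (B, w) = 0" using zero[OF R Bw(1)] Bw(2) by simp
  then show "(\<Prod>y\<in>R. \<omega> y) = 0" using Bw(1) by (intro prod_zero[OF semi_pointed_finite[OF fin sR]]) blast
qed

lemma SPi_common_point:
  assumes D: "A1 \<inter> A2 = {}" and x0: "x0 \<in> A1 \<union> A2"
  shows "{R \<in> SPi A1 A2. \<forall>y\<in>R. x0 \<in> fst y} = (\<lambda>u. {(A1 \<union> A2, u)}) ` sp_pointings A1 A2"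
proof
  show "{R \<in> SPi A1 A2. \<forall>y\<in>R. x0 \<in> fst y} \<subseteq> (\<lambda>u. {(A1 \<union> A2, u)}) ` sp_pointings A1 A2"
  proof
    fix R assume "R \<in> {R \<in> SPi A1 A2. \<forall>y\<in>R. x0 \<in> fst y}"
    then have s: "semi_pointed A1 A2 R" and all: "\<forall>y\<in>R. x0 \<in> fst y" by (auto simp: mem_SPi_iff)
    obtain B w where Bw: "(B, w) \<in> R" "x0 \<in> B" using sp_blockE[OF s x0] .
    have "R = {(B, w)}"
    proof
      show "R \<subseteq> {(B, w)}"
      proof
        fix y assume y: "y \<in> R"
        obtain B' w' where y': "y = (B', w')" by (cases y)
        have "x0 \<in> B'" using all y y' by auto
        then show "y \<in> {(B, w)}" using sp_blocks_eq[OF s Bw(1), of B' w' x0] y y' Bw(2) by auto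
      qed
    qed (use Bw in simp)
    then show "R \<in> (\<lambda>u. {(A1 \<union> A2, u)}) ` sp_pointings A1 A2"
      using semi_pointed_single_block_iff[OF D] s by auto
  qed
  show "(\<lambda>u. {(A1 \<union> A2, u)}) ` sp_pointings A1 A2 \<subseteq> {R \<in> SPi A1 A2. \<forall>y\<in>R. x0 \<in> fst y}"
    using semi_pointed_single_block_iff[OF D] x0 by (auto simp: mem_SPi_iff)
qed

lemma partition_weight_common_point:
  assumes fin: "finite A1" "finite A2" and D: "A1 \<inter> A2 = {}" and x0: "x0 \<in> A1 \<union> A2"
    and zero: "\<And>R y. R \<in> SPi A1 A2 \<Longrightarrow> y \<in> R \<Longrightarrow> x0 \<notin> fst y \<Longrightarrow> \<omega> y = 0"
  shows "partition_weight A1 A2 \<omega> = (\<Sum>u\<in>sp_pointings A1 A2. \<omega> (A1 \<union> A2, u))"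
proof -
  let ?C = "{R \<in> SPi A1 A2. \<forall>y\<in>R. x0 \<in> fst y}"
  have "partition_weight A1 A2 \<omega> = (\<Sum>R\<in>?C. \<Prod>y\<in>R. \<omega> y)"
    unfolding partition_weight_def
  proof (rule sum.mono_neutral_right)
    show "\<forall>R\<in>SPi A1 A2 - ?C. (\<Prod>y\<in>R. \<omega> y) = 0"
    proof
      fix R assume R: "R \<in> SPi A1 A2 - ?C"
      then obtain y where "y \<in> R" "\<omega> y = 0" using zero by blast
      then show "(\<Prod>y\<in>R. \<omega> y) = 0"
        using R semi_pointed_finite[OF fin] by (intro prod_zero) (auto simp: mem_SPi_iff)
    qed
  qed (use finite_SPi[OF fin] in auto)
  also have "\<dots> = (\<Sum>u\<in>sp_pointings A1 A2. \<omega> (A1 \<union> A2, u))"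
    unfolding SPi_common_point[OF D x0] by (subst sum.reindex) (auto simp: inj_on_def)
  finally show ?thesis .
qed

lemma semi_pointed_Un:
  assumes s1: "semi_pointed (A \<inter> V1) (A \<inter> V2) R1" and s2: "semi_pointed (V1 - A) (V2 - A) R2"
    and A: "A \<subseteq> V1 \<union> V2"
  shows "semi_pointed V1 V2 (R1 \<union> R2)"
proof -
  define U where "U b = (if b then A else (V1 \<union> V2) - A)" for b
  define G where "G b = (if b then R1 else R2)" for b
  have "(V1 \<union> V2 - A) \<inter> V1 = V1 - A" "(V1 \<union> V2 - A) \<inter> V2 = V2 - A" by blast+
  then have "semi_pointed (U b \<inter> V1) (U b \<inter> V2) (G b)" for b
    using s1 s2 unfolding U_def G_def by simp
  then have "semi_pointed V1 V2 (\<Union>b\<in>{True, False}. G b)"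
    by (rule semi_pointed_UN) (use A in \<open>auto simp: U_def\<close>)
  moreover have "(\<Union>b\<in>{True, False}. G b) = R1 \<union> R2" unfolding G_def by auto
  ultimately show ?thesis by simp
qed

lemma semi_pointed_split:
  fixes \<phi> :: "'a set \<times> 'a option \<Rightarrow> bool"
  assumes sR: "semi_pointed V1 V2 R"
  defines "A \<equiv> \<Union>(fst ` {y\<in>R. \<phi> y})"
  shows "A \<subseteq> V1 \<union> V2" "semi_pointed (A \<inter> V1) (A \<inter> V2) {y\<in>R. \<phi> y}"
    "semi_pointed (V1 - A) (V2 - A) {y\<in>R. \<not> \<phi> y}"
proof -
  show "A \<subseteq> V1 \<union> V2" using sp_Union_blocks[OF sR] unfolding A_def by blast
  show "semi_pointed (A \<inter> V1) (A \<inter> V2) {y\<in>R. \<phi> y}"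
    by (rule semi_pointed_subpartition[OF sR]) (auto simp: A_def)
  let ?B = "\<Union>(fst ` {y\<in>R. \<not> \<phi> y})"
  have "?B \<inter> A = {}"
  proof (rule ccontr)
    assume "?B \<inter> A \<noteq> {}"
    then obtain z where z: "z \<in> ?B" "z \<in> A" by blast
    then obtain y where y: "y \<in> R" "\<not> \<phi> y" "z \<in> fst y" by blast
    obtain y' where y': "y' \<in> R" "\<phi> y'" "z \<in> fst y'" using z(2) unfolding A_def by blast
    have "y = y'" using sp_blocks_eq[OF sR, of "fst y" "snd y" "fst y'" "snd y'" z] y y'
      by (simp add: prod_eq_iff)
    then show False using y(2) y'(2) by simp
  qed
  moreover have "?B \<union> A = V1 \<union> V2" using sp_Union_blocks[OF sR] unfolding A_def by blast
  ultimately have "?B \<inter> V1 = V1 - A" "?B \<inter> V2 = V2 - A" by blast+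
  then show "semi_pointed (V1 - A) (V2 - A) {y\<in>R. \<not> \<phi> y}"
    using semi_pointed_subpartition[OF sR, of "{y\<in>R. \<not> \<phi> y}" ?B] by auto
qed

lemma sum_SPi_split:
  assumes fin: "finite V1" "finite V2"
  shows "(\<Sum>R\<in>SPi V1 V2. f R) =
    (\<Sum>A\<in>Pow (V1 \<union> V2). \<Sum>R1\<in>{R1\<in>SPi (A \<inter> V1) (A \<inter> V2). \<forall>y\<in>R1. \<phi> y}.
        \<Sum>R2\<in>{R2\<in>SPi (V1 - A) (V2 - A). \<forall>y\<in>R2. \<not> \<phi> y}. f (R1 \<union> R2))"
proof -
  let ?X = "\<lambda>A. {R1\<in>SPi (A \<inter> V1) (A \<inter> V2). \<forall>y\<in>R1. \<phi> y}"
  let ?Y = "\<lambda>A. {R2\<in>SPi (V1 - A) (V2 - A). \<forall>y\<in>R2. \<not> \<phi> y}"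
  have finX: "finite (?X A)" and finY: "finite (?Y A)" for A
    using finite_SPi[of "A \<inter> V1" "A \<inter> V2"] finite_SPi[of "V1 - A" "V2 - A"] fin by auto
  have "(\<Sum>A\<in>Pow (V1 \<union> V2). \<Sum>R1\<in>?X A. \<Sum>R2\<in>?Y A. f (R1 \<union> R2))
      = (\<Sum>(A, RR)\<in>(SIGMA A:Pow (V1 \<union> V2). ?X A \<times> ?Y A). f (fst RR \<union> snd RR))"
    by (simp add: sum.cartesian_product sum.Sigma fin finX finY case_prod_beta)
  also have "\<dots> = (\<Sum>R\<in>SPi V1 V2. f R)"
  proof (rule sum.reindex_bij_witness[where j = "\<lambda>(A, RR). fst RR \<union> snd RR"
        and i = "\<lambda>R. (\<Union>(fst ` {y\<in>R. \<phi> y}), {y\<in>R. \<phi> y}, {y\<in>R. \<not> \<phi> y})"])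
    fix R assume "R \<in> SPi V1 V2"
    then show "(\<Union>(fst ` {y\<in>R. \<phi> y}), {y\<in>R. \<phi> y}, {y\<in>R. \<not> \<phi> y}) \<in> (SIGMA A:Pow (V1 \<union> V2). ?X A \<times> ?Y A)"
      using semi_pointed_split[of V1 V2 R \<phi>] by (auto simp: mem_SPi_iff)
  next
    fix T assume "T \<in> (SIGMA A:Pow (V1 \<union> V2). ?X A \<times> ?Y A)"
    then obtain A R1 R2 where T: "T = (A, R1, R2)" "A \<subseteq> V1 \<union> V2"
      "semi_pointed (A \<inter> V1) (A \<inter> V2) R1" "\<forall>y\<in>R1. \<phi> y"
      "semi_pointed (V1 - A) (V2 - A) R2" "\<forall>y\<in>R2. \<not> \<phi> y"
      by (auto simp: mem_SPi_iff)
    show "(\<lambda>(A, RR). fst RR \<union> snd RR) T \<in> SPi V1 V2"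
      using semi_pointed_Un[OF T(3,5,2)] T(1) by (simp add: mem_SPi_iff)
    have "\<Union>(fst ` R1) = A" using sp_Union_blocks[OF T(3)] T(2) by blast
    moreover have "{y \<in> R1 \<union> R2. \<phi> y} = R1" "{y \<in> R1 \<union> R2. \<not> \<phi> y} = R2" using T(4,6) by auto
    ultimately show "(\<lambda>R. (\<Union>(fst ` {y\<in>R. \<phi> y}), {y\<in>R. \<phi> y}, {y\<in>R. \<not> \<phi> y}))
        ((\<lambda>(A, RR). fst RR \<union> snd RR) T) = T"
      using T(1) by simp
  qed auto
  finally show ?thesis by simp
qed

lemma sum_prod_filter:
  assumes "finite S" and "\<And>R. R \<in> S \<Longrightarrow> finite R"
  shows "(\<Sum>R\<in>{R\<in>S. \<forall>y\<in>R. P y}. \<Prod>y\<in>R. \<omega> y) = (\<Sum>R\<in>S. \<Prod>y\<in>R. if P y then \<omega> y else (0::rat))"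
proof -
  have "(\<Prod>y\<in>R. if P y then \<omega> y else 0) = (if \<forall>y\<in>R. P y then \<Prod>y\<in>R. \<omega> y else 0)" if "R \<in> S" for R
    using assms(2)[OF that] by (auto intro: prod_zero)
  then show ?thesis by (simp add: sum.inter_filter[OF assms(1)])
qed

lemma partition_weight_split:
  assumes fin: "finite V1" "finite V2"
  shows "partition_weight V1 V2 \<omega> = (\<Sum>A\<in>Pow (V1 \<union> V2).
    partition_weight (A \<inter> V1) (A \<inter> V2) (\<lambda>y. if \<phi> y then \<omega> y else 0) *
    partition_weight (V1 - A) (V2 - A) (\<lambda>y. if \<phi> y then 0 else \<omega> y))"
proof -
  let ?X = "\<lambda>A. {R1\<in>SPi (A \<inter> V1) (A \<inter> V2). \<forall>y\<in>R1. \<phi> y}"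
  let ?Y = "\<lambda>A. {R2\<in>SPi (V1 - A) (V2 - A). \<forall>y\<in>R2. \<not> \<phi> y}"
  have finR: "finite R" if "R \<in> SPi W1 W2" "W1 \<subseteq> V1" "W2 \<subseteq> V2" for R W1 W2
    using semi_pointed_finite[of W1 W2 R] that fin by (auto simp: mem_SPi_iff finite_subset)
  have finS: "finite (SPi W1 W2)" if "W1 \<subseteq> V1" "W2 \<subseteq> V2" for W1 W2
    using finite_SPi that fin finite_subset by metis
  have prod_Un: "(\<Prod>y\<in>R1 \<union> R2. \<omega> y) = (\<Prod>y\<in>R1. \<omega> y) * (\<Prod>y\<in>R2. \<omega> y)"
    if "R1 \<in> ?X A" "R2 \<in> ?Y A" for A R1 R2
    by (rule prod.union_disjoint) (use that finR in auto)
  have "partition_weight V1 V2 \<omega> = (\<Sum>A\<in>Pow (V1 \<union> V2). \<Sum>R1\<in>?X A. \<Sum>R2\<in>?Y A. \<Prod>y\<in>R1 \<union> R2. \<omega> y)"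
    unfolding partition_weight_def by (rule sum_SPi_split[OF fin])
  also have "\<dots> = (\<Sum>A\<in>Pow (V1 \<union> V2). \<Sum>R1\<in>?X A. \<Sum>R2\<in>?Y A. (\<Prod>y\<in>R1. \<omega> y) * (\<Prod>y\<in>R2. \<omega> y))"
    by (intro sum.cong refl prod_Un)
  also have "\<dots> = (\<Sum>A\<in>Pow (V1 \<union> V2). (\<Sum>R1\<in>?X A. \<Prod>y\<in>R1. \<omega> y) * (\<Sum>R2\<in>?Y A. \<Prod>y\<in>R2. \<omega> y))"
    by (simp add: sum_product)
  also have "\<dots> = (\<Sum>A\<in>Pow (V1 \<union> V2).
    partition_weight (A \<inter> V1) (A \<inter> V2) (\<lambda>y. if \<phi> y then \<omega> y else 0) *
    partition_weight (V1 - A) (V2 - A) (\<lambda>y. if \<phi> y then 0 else \<omega> y))"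
  proof (intro sum.cong refl arg_cong2[where f = "(*)"])
    fix A assume "A \<in> Pow (V1 \<union> V2)"
    then have sub: "A \<inter> V1 \<subseteq> V1" "A \<inter> V2 \<subseteq> V2" "V1 - A \<subseteq> V1" "V2 - A \<subseteq> V2" by auto
    show "(\<Sum>R1\<in>?X A. \<Prod>y\<in>R1. \<omega> y) = partition_weight (A \<inter> V1) (A \<inter> V2) (\<lambda>y. if \<phi> y then \<omega> y else 0)"
      unfolding partition_weight_def by (rule sum_prod_filter[OF finS[OF sub(1,2)] finR[OF _ sub(1,2)]])
    have "(\<Sum>R2\<in>?Y A. \<Prod>y\<in>R2. \<omega> y) = (\<Sum>R\<in>SPi (V1 - A) (V2 - A). \<Prod>y\<in>R. if \<not> \<phi> y then \<omega> y else 0)"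
      by (rule sum_prod_filter[OF finS[OF sub(3,4)] finR[OF _ sub(3,4)]])
    also have "(\<lambda>y. if \<not> \<phi> y then \<omega> y else 0) = (\<lambda>y. if \<phi> y then 0 else \<omega> y)" by auto
    finally show "(\<Sum>R2\<in>?Y A. \<Prod>y\<in>R2. \<omega> y) = partition_weight (V1 - A) (V2 - A) (\<lambda>y. if \<phi> y then 0 else \<omega> y)"
      unfolding partition_weight_def .
  qed
  finally show ?thesis .
qed

lemma partition_weight_block_containing:
  assumes fin: "finite V1" "finite V2" and D: "V1 \<inter> V2 = {}" and x0: "x0 \<in> V1 \<union> V2"
  shows "partition_weight V1 V2 \<omega> = (\<Sum>A\<in>{A\<in>Pow (V1 \<union> V2). x0 \<in> A}.
    (\<Sum>u\<in>sp_pointings (A \<inter> V1) (A \<inter> V2). \<omega> (A, u)) * partition_weight (V1 - A) (V2 - A) \<omega>)"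
proof -
  let ?in = "\<lambda>y. if x0 \<in> fst y then \<omega> y else 0" and ?out = "\<lambda>y. if x0 \<in> fst y then 0 else \<omega> y"
  have "partition_weight V1 V2 \<omega> = (\<Sum>A\<in>Pow (V1 \<union> V2).
      partition_weight (A \<inter> V1) (A \<inter> V2) ?in * partition_weight (V1 - A) (V2 - A) ?out)"
    by (rule partition_weight_split[OF fin])
  also have "\<dots> = (\<Sum>A\<in>{A\<in>Pow (V1 \<union> V2). x0 \<in> A}.
      partition_weight (A \<inter> V1) (A \<inter> V2) ?in * partition_weight (V1 - A) (V2 - A) ?out)"
  proof (rule sum.mono_neutral_right)
    show "\<forall>A\<in>Pow (V1 \<union> V2) - {A\<in>Pow (V1 \<union> V2). x0 \<in> A}.
      partition_weight (A \<inter> V1) (A \<inter> V2) ?in * partition_weight (V1 - A) (V2 - A) ?out = 0"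
      using partition_weight_eq_0[of "V1 - _" "V2 - _" x0 ?out] fin x0 by auto
  qed (use fin in auto)
  also have "\<dots> = (\<Sum>A\<in>{A\<in>Pow (V1 \<union> V2). x0 \<in> A}.
    (\<Sum>u\<in>sp_pointings (A \<inter> V1) (A \<inter> V2). \<omega> (A, u)) * partition_weight (V1 - A) (V2 - A) \<omega>)"
  proof (intro sum.cong refl arg_cong2[where f = "(*)"])
    fix A assume A: "A \<in> {A\<in>Pow (V1 \<union> V2). x0 \<in> A}"
    then have "A \<inter> V1 \<union> A \<inter> V2 = A" by auto
    then show "partition_weight (A \<inter> V1) (A \<inter> V2) ?in = (\<Sum>u\<in>sp_pointings (A \<inter> V1) (A \<inter> V2). \<omega> (A, u))"
      using partition_weight_common_point[of "A \<inter> V1" "A \<inter> V2" x0 ?in] fin D A by auto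
    show "partition_weight (V1 - A) (V2 - A) ?out = partition_weight (V1 - A) (V2 - A) \<omega>"
      using A sp_block_subset by (intro partition_weight_cong) (fastforce simp: mem_SPi_iff)
  qed
  finally show ?thesis .
qed

lemma sum_SPi_with_block:
  assumes fin: "finite V1" "finite V2"
  shows "(\<Sum>R\<in>{R\<in>SPi V1 V2. \<exists>y\<in>R. \<phi> y}. \<Prod>y\<in>R. \<omega> y)
    = partition_weight V1 V2 \<omega> - partition_weight V1 V2 (\<lambda>y. if \<phi> y then 0 else \<omega> y)"
proof -
  have finR: "\<And>R. R \<in> SPi V1 V2 \<Longrightarrow> finite R" using semi_pointed_finite[OF fin] by (simp add: mem_SPi_iff)
  have eq: "(\<lambda>y. if \<phi> y then 0 else \<omega> y) = (\<lambda>y. if \<not> \<phi> y then \<omega> y else 0)" by auto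
  have "partition_weight V1 V2 (\<lambda>y. if \<phi> y then 0 else \<omega> y) = (\<Sum>R\<in>{R\<in>SPi V1 V2. \<forall>y\<in>R. \<not> \<phi> y}. \<Prod>y\<in>R. \<omega> y)"
    unfolding partition_weight_def eq by (rule sum_prod_filter[OF finite_SPi[OF fin] finR, symmetric])
  moreover have "partition_weight V1 V2 \<omega> = (\<Sum>R\<in>{R\<in>SPi V1 V2. \<exists>y\<in>R. \<phi> y}. \<Prod>y\<in>R. \<omega> y)
      + (\<Sum>R\<in>{R\<in>SPi V1 V2. \<forall>y\<in>R. \<not> \<phi> y}. \<Prod>y\<in>R. \<omega> y)"
    unfolding partition_weight_def
      by (subst sum.union_disjoint[symmetric]) (auto intro!: sum.cong finite_SPi fin)
  ultimately show ?thesis by simp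
qed

lemma partition_weight_pointed_at:
  assumes fin: "finite W1" "finite W2" and D: "W1 \<inter> W2 = {}"
  shows "partition_weight W1 W2 (\<lambda>y. if snd y = Some v then \<omega> y else 0)
    = (if v \<in> W1 then \<omega> (W1 \<union> W2, Some v) else if W1 \<union> W2 = {} then 1 else 0)"
proof -
  let ?in = "\<lambda>y. if snd y = Some v then \<omega> y else 0"
  have v_in: "v \<in> fst y \<and> v \<in> W1" if "R \<in> SPi W1 W2" "y \<in> R" "snd y = Some v" for R y
    using sp_point_in_block[of W1 W2 R "fst y" v] that by (cases y) (auto simp: mem_SPi_iff)
  consider "v \<in> W1" | "v \<notin> W1" "W1 \<union> W2 = {}" | "v \<notin> W1" "W1 \<union> W2 \<noteq> {}" by blast
  then show ?thesis
  proof cases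
    case 1
    have "partition_weight W1 W2 ?in = (\<Sum>u\<in>sp_pointings W1 W2. ?in (W1 \<union> W2, u))"
    proof (rule partition_weight_common_point[OF fin D])
      show "?in y = 0" if "R \<in> SPi W1 W2" "y \<in> R" "v \<notin> fst y" for R y
        using v_in[OF that(1,2)] that(3) by auto
    qed (use 1 in blast)
    then show ?thesis using 1 fin by (simp add: sum_sp_pointings)
  next
    case 2
    then show ?thesis by (simp add: partition_weight_empty)
  next
    case 3
    then obtain x0 where x0: "x0 \<in> W1 \<union> W2" by blast
    have "partition_weight W1 W2 ?in = 0"
      by (rule partition_weight_eq_0[OF fin x0]) (use v_in 3 in auto)
    then show ?thesis using 3 by simp
  qed
qed

lemma sum_SPi_pointed_at:
  assumes fin: "finite V1" "finite V2" and D: "V1 \<inter> V2 = {}" and v: "v \<in> V1"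
  shows "(\<Sum>R\<in>{R\<in>SPi V1 V2. \<exists>y\<in>R. snd y = Some v}. \<Prod>y\<in>R. \<omega> y)
     = (\<Sum>A\<in>{A\<in>Pow (V1 \<union> V2). v \<in> A}. \<omega> (A, Some v) * partition_weight (V1 - A) (V2 - A) \<omega>)"
proof -
  let ?in = "\<lambda>y. if snd y = Some v then \<omega> y else 0" and ?out = "\<lambda>y. if snd y = Some v then 0 else \<omega> y"
  have out: "partition_weight (V1 - A) (V2 - A) ?out = partition_weight (V1 - A) (V2 - A) \<omega>" if "v \<in> A" for A
    using that sp_point_in_block by (intro partition_weight_cong) (fastforce simp: mem_SPi_iff)
  have "partition_weight V1 V2 \<omega> = (\<Sum>A\<in>Pow (V1 \<union> V2).
      partition_weight (A \<inter> V1) (A \<inter> V2) ?in * partition_weight (V1 - A) (V2 - A) ?out)"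
    by (rule partition_weight_split[OF fin])
  also have "\<dots> = (\<Sum>A\<in>Pow (V1 \<union> V2). (if v \<in> A then \<omega> (A, Some v) * partition_weight (V1 - A) (V2 - A) \<omega>
      else if A = {} then partition_weight V1 V2 ?out else 0))"
  proof (intro sum.cong refl)
    fix A assume "A \<in> Pow (V1 \<union> V2)"
    then have AA: "A \<inter> V1 \<union> A \<inter> V2 = A" by auto
    have "partition_weight (A \<inter> V1) (A \<inter> V2) ?in = (if v \<in> A \<inter> V1 then \<omega> (A \<inter> V1 \<union> A \<inter> V2, Some v)
        else if A \<inter> V1 \<union> A \<inter> V2 = {} then 1 else 0)"
      by (rule partition_weight_pointed_at) (use fin D in auto)
    also have "\<dots> = (if v \<in> A then \<omega> (A, Some v) else if A = {} then 1 else 0)"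
      unfolding AA using v by simp
    finally show "partition_weight (A \<inter> V1) (A \<inter> V2) ?in * partition_weight (V1 - A) (V2 - A) ?out
      = (if v \<in> A then \<omega> (A, Some v) * partition_weight (V1 - A) (V2 - A) \<omega>
         else if A = {} then partition_weight V1 V2 ?out else 0)"
      by (simp add: out)
  qed
  also have "\<dots> = (\<Sum>A\<in>{A\<in>Pow (V1 \<union> V2). v \<in> A}. \<omega> (A, Some v) * partition_weight (V1 - A) (V2 - A) \<omega>)
      + partition_weight V1 V2 ?out"
    using fin by (simp add: sum.If_cases sum.delta Int_def)
  finally show ?thesis by (simp add: sum_SPi_with_block[OF fin])
qed

text \<open>Double counting of the pairs (x0, R) according to the block of R containing x0.\<close>

lemma card_mult_partition_weight:
  assumes fin: "finite V1" "finite V2" and D: "V1 \<inter> V2 = {}"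
  shows "of_nat (card (V1 \<union> V2)) * partition_weight V1 V2 \<omega> = (\<Sum>A\<in>Pow (V1 \<union> V2).
    of_nat (card A) * ((\<Sum>u\<in>sp_pointings (A \<inter> V1) (A \<inter> V2). \<omega> (A, u)) * partition_weight (V1 - A) (V2 - A) \<omega>))"
proof -
  let ?t = "\<lambda>A. (\<Sum>u\<in>sp_pointings (A \<inter> V1) (A \<inter> V2). \<omega> (A, u)) * partition_weight (V1 - A) (V2 - A) \<omega>"
  have "of_nat (card (V1 \<union> V2)) * partition_weight V1 V2 \<omega> = (\<Sum>x0\<in>V1 \<union> V2. partition_weight V1 V2 \<omega>)"
    by simp
  also have "\<dots> = (\<Sum>x0\<in>V1 \<union> V2. \<Sum>A\<in>{A\<in>Pow (V1 \<union> V2). x0 \<in> A}. ?t A)"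
    by (intro sum.cong refl partition_weight_block_containing[OF fin D])
  also have "\<dots> = (\<Sum>A\<in>Pow (V1 \<union> V2). \<Sum>x0\<in>{x0\<in>V1 \<union> V2. x0 \<in> A}. ?t A)"
    by (rule sum.swap_restrict) (use fin in auto)
  also have "\<dots> = (\<Sum>A\<in>Pow (V1 \<union> V2). of_nat (card A) * ?t A)"
  proof (intro sum.cong refl)
    fix A assume "A \<in> Pow (V1 \<union> V2)"
    then have "{x0\<in>V1 \<union> V2. x0 \<in> A} = A" by auto
    then show "(\<Sum>x0\<in>{x0\<in>V1 \<union> V2. x0 \<in> A}. ?t A) = of_nat (card A) * ?t A" by simp
  qed
  finally show ?thesis .
qed

section \<open>Bivariate exponential generating functions\<close>

unbundle fps_syntax

definition bser_fps :: "bser \<Rightarrow> rat fps fps" where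
  "bser_fps F = Abs_fps (\<lambda>p. Abs_fps (\<lambda>q. F p q))"

lemma bser_fps_nth [simp]: "bser_fps F $ p $ q = F p q"
  unfolding bser_fps_def by simp

lemma bser_fps_inject: "bser_fps F = bser_fps G \<Longrightarrow> F = G"
  by (metis bser_fps_nth ext)

lemma bser_fps_bmul: "bser_fps (bmul F G) = bser_fps F * bser_fps G"
proof (intro fps_ext)
  fix p q
  have "(bser_fps F * bser_fps G) $ p $ q = (\<Sum>i=0..p. (bser_fps F $ i * bser_fps G $ (p - i)) $ q)"
    by (simp add: fps_mult_nth fps_sum_nth)
  also have "\<dots> = bmul F G p q"
    unfolding bmul_def by (simp add: fps_mult_nth atLeast0AtMost)
  finally show "bser_fps (bmul F G) $ p $ q = (bser_fps F * bser_fps G) $ p $ q" by simp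
qed

lemma bser_fps_bone: "bser_fps bone = 1"
  by (intro fps_ext) (simp add: bone_def)

lemma bmul_comm: "bmul F G = bmul G F"
  by (rule bser_fps_inject) (simp add: bser_fps_bmul mult.commute)

lemma bmul_assoc: "bmul (bmul F G) H = bmul F (bmul G H)"
  by (rule bser_fps_inject) (simp add: bser_fps_bmul mult.assoc)

lemma bmul_bone: "bmul F bone = F"
  by (rule bser_fps_inject) (simp add: bser_fps_bmul bser_fps_bone)

lemma bser_fps_bsub: "bser_fps (bsub F G) = bser_fps F - bser_fps G"
  by (intro fps_ext) (simp add: bsub_def)

lemma bmul_bsub_bone: "bmul F (bsub G bone) = bsub (bmul F G) F"
  by (rule bser_fps_inject) (simp add: bser_fps_bmul bser_fps_bsub bser_fps_bone algebra_simps)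

lemma bmul_0_0: "bmul F G 0 0 = F 0 0 * G 0 0"
  unfolding bmul_def by simp

definition bscale :: "rat \<Rightarrow> bser \<Rightarrow> bser" where
  "bscale c F = (\<lambda>p q. c * F p q)"

lemma bmul_bscale: "bmul F (bscale c G) = bscale c (bmul F G)"
  unfolding bmul_def bscale_def by (intro ext) (simp add: sum_distrib_left algebra_simps)

definition beuler :: "bser \<Rightarrow> bser" where
  "beuler F = (\<lambda>p q. of_nat (p + q) * F p q)"

lemma beuler_bmul: "beuler (bmul F G) = badd (bmul (beuler F) G) (bmul F (beuler G))"
proof (intro ext)
  fix p q
  have split: "(of_nat (p + q) :: rat) = of_nat (i + j) + of_nat (p - i + (q - j))" if "i \<le> p" "j \<le> q" for i j
    using that by (simp flip: of_nat_add)
  have "beuler (bmul F G) p q = (\<Sum>i\<le>p. \<Sum>j\<le>q. of_nat (i + j) * F i j * G (p - i) (q - j)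
      + F i j * (of_nat (p - i + (q - j)) * G (p - i) (q - j)))"
    unfolding beuler_def bmul_def sum_distrib_left
    by (intro sum.cong refl) (simp add: split algebra_simps)
  also have "\<dots> = badd (bmul (beuler F) G) (bmul F (beuler G)) p q"
    unfolding badd_def bmul_def beuler_def by (simp only: sum.distrib)
  finally show "beuler (bmul F G) p q = badd (bmul (beuler F) G) (bmul F (beuler G)) p q" .
qed

lemma beuler_bpow_Suc: "beuler (bpow F (Suc n)) = bscale (of_nat (Suc n)) (bmul (beuler F) (bpow F n))"
proof (induction n)
  case 0
  show ?case by (simp add: bmul_bone bscale_def beuler_def bmul_comm[of F])
next
  case (Suc n)
  have "beuler (bpow F (Suc (Suc n))) = badd (bmul (beuler F) (bpow F (Suc n))) (bmul F (beuler (bpow F (Suc n))))"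
    by (simp add: beuler_bmul)
  also have "bmul F (beuler (bpow F (Suc n))) = bscale (of_nat (Suc n)) (bmul (beuler F) (bpow F (Suc n)))"
    unfolding Suc.IH bmul_bscale by (simp add: bmul_assoc[symmetric] bmul_comm[of F "beuler F"])
  finally show ?case unfolding badd_def bscale_def by (simp add: algebra_simps)
qed

lemma bpow_eq_0: "F 0 0 = 0 \<Longrightarrow> p + q < n \<Longrightarrow> bpow F n p q = 0"
proof (induction n arbitrary: p q)
  case (Suc n)
  have "F i j * bpow F n (p - i) (q - j) = 0" if "i \<le> p" "j \<le> q" for i j
    using Suc that by (cases "i = 0 \<and> j = 0") auto
  then show ?case unfolding bpow.simps bmul_def by (auto intro!: sum.neutral)
qed simp

lemma bexp_eq_sum_lessThan:
  assumes "F 0 0 = 0" and "p + q < N"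
  shows "bexp F p q = (\<Sum>n<N. bpow F n p q / fact n)"
  unfolding bexp_def
  by (rule sum.mono_neutral_left) (use assms bpow_eq_0[of F] in auto)

lemma bexp_0_0: "bexp F 0 0 = 1"
  unfolding bexp_def by (simp add: bone_def)

lemma beuler_bexp:
  assumes F0: "F 0 0 = 0"
  shows "of_nat (p + q) * bexp F p q = bmul (beuler F) (bexp F) p q"
proof -
  let ?M = "p + q"
  have "of_nat (p + q) * bexp F p q = (\<Sum>n<Suc ?M. beuler (bpow F n) p q / fact n)"
    unfolding bexp_def beuler_def by (simp add: sum_distrib_left lessThan_Suc_atMost)
  also have "\<dots> = (\<Sum>n<?M. beuler (bpow F (Suc n)) p q / fact (Suc n))"
    by (subst sum.lessThan_Suc_shift) (simp add: beuler_def bone_def del: bpow.simps(2))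
  also have "\<dots> = (\<Sum>n<?M. bmul (beuler F) (bpow F n) p q / fact n)"
  proof (intro sum.cong refl)
    fix n
    have "beuler (bpow F (Suc n)) p q / fact (Suc n)
        = of_nat (Suc n) * bmul (beuler F) (bpow F n) p q / (of_nat (Suc n) * fact n)"
      by (simp only: beuler_bpow_Suc bscale_def fact_Suc of_nat_mult)
    then show "beuler (bpow F (Suc n)) p q / fact (Suc n) = bmul (beuler F) (bpow F n) p q / fact n"
      by simp
  qed
  also have "\<dots> = (\<Sum>i\<le>p. \<Sum>j\<le>q. \<Sum>n<?M. beuler F i j * (bpow F n (p - i) (q - j) / fact n))"
    unfolding bmul_def by (simp add: sum_divide_distrib sum.swap[of _ "{..<?M}"])
  also have "\<dots> = (\<Sum>i\<le>p. \<Sum>j\<le>q. beuler F i j * bexp F (p - i) (q - j))"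
  proof (intro sum.cong refl)
    fix i j assume ij: "i \<in> {..p}" "j \<in> {..q}"
    show "(\<Sum>n<?M. beuler F i j * (bpow F n (p - i) (q - j) / fact n)) = beuler F i j * bexp F (p - i) (q - j)"
    proof (cases "i = 0 \<and> j = 0")
      case False
      then have "p - i + (q - j) < ?M" using ij by auto
      then show ?thesis by (simp add: bexp_eq_sum_lessThan[of F, OF F0] sum_distrib_left)
    qed (simp add: beuler_def)
  qed
  also have "\<dots> = bmul (beuler F) (bexp F) p q" unfolding bmul_def by simp
  finally show ?thesis .
qed

lemma sum_Pow_card:
  fixes g :: "nat \<Rightarrow> rat"
  assumes fin: "finite V"
  shows "(\<Sum>A\<in>Pow V. g (card A)) = (\<Sum>i\<le>card V. of_nat (card V choose i) * g i)"
proof -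
  have "(\<Sum>A\<in>Pow V. g (card A)) = (\<Sum>i\<le>card V. \<Sum>A\<in>{A. A \<in> Pow V \<and> card A = i}. g (card A))"
    by (rule sum.group[symmetric]) (use fin card_mono in auto)
  also have "\<dots> = (\<Sum>i\<le>card V. of_nat (card V choose i) * g i)"
  proof (intro sum.cong refl)
    fix i
    have "card {A. A \<in> Pow V \<and> card A = i} = card V choose i"
      using n_subsets[OF fin, of i] by (simp add: Pow_def)
    then show "(\<Sum>A\<in>{A. A \<in> Pow V \<and> card A = i}. g (card A)) = of_nat (card V choose i) * g i"
      by simp
  qed
  finally show ?thesis .
qed

lemma sum_Pow_Un_card:
  fixes g :: "nat \<Rightarrow> nat \<Rightarrow> nat \<Rightarrow> nat \<Rightarrow> rat"
  assumes fin: "finite V1" "finite V2" and D: "V1 \<inter> V2 = {}"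
  shows "(\<Sum>A\<in>Pow (V1 \<union> V2). g (card (A \<inter> V1)) (card (A \<inter> V2)) (card (V1 - A)) (card (V2 - A)))
    = (\<Sum>i\<le>card V1. \<Sum>j\<le>card V2. of_nat (card V1 choose i) * of_nat (card V2 choose j)
        * g i j (card V1 - i) (card V2 - j))"
proof -
  have "(\<Sum>A\<in>Pow (V1 \<union> V2). g (card (A \<inter> V1)) (card (A \<inter> V2)) (card (V1 - A)) (card (V2 - A)))
      = (\<Sum>(A1, A2)\<in>Pow V1 \<times> Pow V2. g (card A1) (card A2) (card V1 - card A1) (card V2 - card A2))"
  proof (rule sum.reindex_bij_witness[where i = "\<lambda>(A1, A2). A1 \<union> A2" and j = "\<lambda>A. (A \<inter> V1, A \<inter> V2)"])
    fix A assume "A \<in> Pow (V1 \<union> V2)"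
    then show "(\<lambda>(A1, A2). A1 \<union> A2) (A \<inter> V1, A \<inter> V2) = A" by auto
    have "card (V1 - A) = card V1 - card (A \<inter> V1)" "card (V2 - A) = card V2 - card (A \<inter> V2)"
      using fin by (metis Diff_Int2 Diff_Int_distrib2 card_Diff_subset_Int finite_Int inf.idem inf_commute)+
    then show "(case (A \<inter> V1, A \<inter> V2) of (A1, A2) \<Rightarrow> g (card A1) (card A2) (card V1 - card A1) (card V2 - card A2))
        = g (card (A \<inter> V1)) (card (A \<inter> V2)) (card (V1 - A)) (card (V2 - A))" by simp
  qed (use D in auto)
  also have "\<dots> = (\<Sum>A1\<in>Pow V1. \<Sum>j\<le>card V2. of_nat (card V2 choose j)
      * g (card A1) j (card V1 - card A1) (card V2 - j))"
    unfolding sum.cartesian_product[symmetric]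
    by (intro sum.cong refl sum_Pow_card[OF fin(2), of "\<lambda>m. g _ m _ (card V2 - m)"])
  also have "\<dots> = (\<Sum>i\<le>card V1. of_nat (card V1 choose i) * (\<Sum>j\<le>card V2. of_nat (card V2 choose j)
      * g i j (card V1 - i) (card V2 - j)))"
    by (rule sum_Pow_card[OF fin(1)])
  also have "\<dots> = (\<Sum>i\<le>card V1. \<Sum>j\<le>card V2. of_nat (card V1 choose i) * of_nat (card V2 choose j)
      * g i j (card V1 - i) (card V2 - j))"
    by (simp add: sum_distrib_left mult.assoc)
  finally show ?thesis .
qed

lemma fact_mult_bmul:
  "fact p * fact q * bmul F G p q = (\<Sum>i\<le>p. \<Sum>j\<le>q. of_nat (p choose i) * of_nat (q choose j) *
      (fact i * fact j * F i j) * (fact (p - i) * fact (q - j) * G (p - i) (q - j)))"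
  unfolding bmul_def sum_distrib_left
proof (intro sum.cong refl)
  fix i j assume "i \<in> {..p}" "j \<in> {..q}"
  then have "(of_nat (p choose i) :: rat) * (fact i * fact (p - i)) = fact p"
    "(of_nat (q choose j) :: rat) * (fact j * fact (q - j)) = fact q"
    by (simp_all add: binomial_fact field_simps)
  then show "fact p * fact q * (F i j * G (p - i) (q - j)) = of_nat (p choose i) * of_nat (q choose j) *
      (fact i * fact j * F i j) * (fact (p - i) * fact (q - j) * G (p - i) (q - j))"
    by (simp add: algebra_simps flip: \<open>_ = fact p\<close> \<open>_ = fact q\<close>)
qed

lemma sum_Pow_Un_fact_mult_bmul:
  assumes fin: "finite V1" "finite V2" and D: "V1 \<inter> V2 = {}"
  shows "(\<Sum>A\<in>Pow (V1 \<union> V2). (fact (card (A \<inter> V1)) * fact (card (A \<inter> V2)) * F (card (A \<inter> V1)) (card (A \<inter> V2)))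
      * (fact (card (V1 - A)) * fact (card (V2 - A)) * G (card (V1 - A)) (card (V2 - A))))
    = fact (card V1) * fact (card V2) * bmul F G (card V1) (card V2)"
  unfolding sum_Pow_Un_card[OF fin D, where g = "\<lambda>a b c d. (fact a * fact b * F a b) * (fact c * fact d * G c d)"]
    fact_mult_bmul by (simp add: mult.assoc)

lemma egf_0_0: "egf a 0 0 = 0"
  unfolding egf_def by simp

lemma fact_mult_egf: "fact p * fact q * egf a p q = (if p = 0 \<and> q = 0 then 0 else a p q)"
  unfolding egf_def by simp

lemma fact_mult_beuler_egf: "fact p * fact q * beuler (egf h) p q = of_nat (p + q) * h p q"
  unfolding beuler_def egf_def by (cases "p = 0 \<and> q = 0") (auto simp: field_simps)

lemma card_Diff_add_card_Diff_less:
  assumes "finite V1" "finite V2" "A \<subseteq> V1 \<union> V2" "A \<noteq> {}"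
  shows "card (V1 - A) + card (V2 - A) < card V1 + card V2"
  using assms card_mono[of V1 "V1 - A"] card_mono[of V2 "V2 - A"]
    psubset_card_mono[of V1 "V1 - A"] psubset_card_mono[of V2 "V2 - A"] by fastforce

text \<open>The exponential formula, by induction on the size of the ground set: marking a point
  (\<open>card_mult_partition_weight\<close>) on the left corresponds to the Euler operator
  (\<open>beuler_bexp\<close>) on the right.\<close>

lemma partition_weight_exp:
  fixes h :: "nat \<Rightarrow> nat \<Rightarrow> rat"
  assumes "finite V1" "finite V2" "V1 \<inter> V2 = {}"
    and "\<And>A. A \<subseteq> V1 \<union> V2 \<Longrightarrow> A \<noteq> {} \<Longrightarrow>
      (\<Sum>u\<in>sp_pointings (A \<inter> V1) (A \<inter> V2). \<omega> (A, u)) = h (card (A \<inter> V1)) (card (A \<inter> V2))"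
  shows "partition_weight V1 V2 \<omega> = fact (card V1) * fact (card V2) * bexp (egf h) (card V1) (card V2)"
  using assms
proof (induction "card V1 + card V2" arbitrary: V1 V2 rule: less_induct)
  case less
  let ?E = "bexp (egf h)" and ?p = "card V1" and ?q = "card V2"
  note fin = less.prems(1,2) and D = less.prems(3) and hyp = less.prems(4)
  have "of_nat (?p + ?q) * partition_weight V1 V2 \<omega> = (\<Sum>A\<in>Pow (V1 \<union> V2). of_nat (card A) *
      ((\<Sum>u\<in>sp_pointings (A \<inter> V1) (A \<inter> V2). \<omega> (A, u)) * partition_weight (V1 - A) (V2 - A) \<omega>))"
    using card_mult_partition_weight[OF fin D] card_Un_disjoint[OF fin D] by simp
  also have "\<dots> = (\<Sum>A\<in>Pow (V1 \<union> V2).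
      (fact (card (A \<inter> V1)) * fact (card (A \<inter> V2)) * beuler (egf h) (card (A \<inter> V1)) (card (A \<inter> V2)))
      * (fact (card (V1 - A)) * fact (card (V2 - A)) * ?E (card (V1 - A)) (card (V2 - A))))"
  proof (intro sum.cong refl)
    fix A assume A: "A \<in> Pow (V1 \<union> V2)"
    show "of_nat (card A) * ((\<Sum>u\<in>sp_pointings (A \<inter> V1) (A \<inter> V2). \<omega> (A, u)) * partition_weight (V1 - A) (V2 - A) \<omega>)
      = (fact (card (A \<inter> V1)) * fact (card (A \<inter> V2)) * beuler (egf h) (card (A \<inter> V1)) (card (A \<inter> V2)))
        * (fact (card (V1 - A)) * fact (card (V2 - A)) * ?E (card (V1 - A)) (card (V2 - A)))"
    proof (cases "A = {}")
      case False
      have "A = A \<inter> V1 \<union> A \<inter> V2" using A by auto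
      then have cA: "card A = card (A \<inter> V1) + card (A \<inter> V2)"
        using card_Un_disjoint[of "A \<inter> V1" "A \<inter> V2"] fin D by auto
      have hyp': "(\<Sum>u\<in>sp_pointings (A' \<inter> (V1 - A)) (A' \<inter> (V2 - A)). \<omega> (A', u))
          = h (card (A' \<inter> (V1 - A))) (card (A' \<inter> (V2 - A)))"
        if "A' \<subseteq> (V1 - A) \<union> (V2 - A)" "A' \<noteq> {}" for A'
      proof -
        have "A' \<inter> (V1 - A) = A' \<inter> V1" "A' \<inter> (V2 - A) = A' \<inter> V2" using that by auto
        then show ?thesis using hyp[of A'] that by auto
      qed
      have "partition_weight (V1 - A) (V2 - A) \<omega>
          = fact (card (V1 - A)) * fact (card (V2 - A)) * ?E (card (V1 - A)) (card (V2 - A))"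
        by (rule less.hyps[OF card_Diff_add_card_Diff_less[OF fin _ False]]) (use A fin D hyp' in auto)
      then show ?thesis using hyp[OF _ False] A cA by (simp add: fact_mult_beuler_egf)
    qed (simp add: beuler_def)
  qed
  also have "\<dots> = fact ?p * fact ?q * bmul (beuler (egf h)) ?E ?p ?q"
    by (rule sum_Pow_Un_fact_mult_bmul[OF fin D])
  also have "\<dots> = of_nat (?p + ?q) * (fact ?p * fact ?q * ?E ?p ?q)"
    using beuler_bexp[of "egf h" ?p ?q] egf_0_0 by simp
  finally show ?case
    using fin by (cases "?p + ?q = 0") (simp_all add: partition_weight_empty bexp_0_0)
qed

corollary partition_weight_exp_subset:
  fixes h :: "nat \<Rightarrow> nat \<Rightarrow> rat"
  assumes fin: "finite V1" "finite V2" and D: "V1 \<inter> V2 = {}" and W: "W1 \<subseteq> V1" "W2 \<subseteq> V2"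
    and hyp: "\<And>A. A \<subseteq> V1 \<union> V2 \<Longrightarrow> A \<noteq> {} \<Longrightarrow>
      (\<Sum>u\<in>sp_pointings (A \<inter> V1) (A \<inter> V2). \<omega> (A, u)) = h (card (A \<inter> V1)) (card (A \<inter> V2))"
  shows "partition_weight W1 W2 \<omega> = fact (card W1) * fact (card W2) * bexp (egf h) (card W1) (card W2)"
proof (rule partition_weight_exp)
  fix A assume A: "A \<subseteq> W1 \<union> W2" "A \<noteq> {}"
  then have "A \<inter> V1 = A \<inter> W1" "A \<inter> V2 = A \<inter> W2" using W D by auto
  then show "(\<Sum>u\<in>sp_pointings (A \<inter> W1) (A \<inter> W2). \<omega> (A, u)) = h (card (A \<inter> W1)) (card (A \<inter> W2))"
    using hyp[of A] A W by auto
qed (use fin W D finite_subset in auto)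

section \<open>Relabelling the ground set\<close>

definition single_block_chains :: "'a set \<Rightarrow> 'a set \<Rightarrow> 'a option \<Rightarrow> nat \<Rightarrow> nat" where
  "single_block_chains V1 V2 w k = card (chains_from (SPi V1 V2) {(V1 \<union> V2, w)} k)"

definition sp_relabel :: "('a \<Rightarrow> 'b) \<Rightarrow> 'a sppart \<Rightarrow> 'b sppart" where
  "sp_relabel f P = (\<lambda>(B, w). (f ` B, map_option f w)) ` P"

lemma mem_sp_relabel_iff: "y \<in> sp_relabel f P \<longleftrightarrow> (\<exists>B w. (B, w) \<in> P \<and> y = (f ` B, map_option f w))"
  unfolding sp_relabel_def by auto

lemma semi_pointed_sp_relabel:
  assumes inj: "inj_on f (V1 \<union> V2)" and sP: "semi_pointed V1 V2 P"
  shows "semi_pointed (f ` V1) (f ` V2) (sp_relabel f P)"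
proof (rule semi_pointedI)
  have image_subset: "f ` B \<subseteq> f ` W \<longleftrightarrow> B \<subseteq> W" if "(B, w) \<in> P" "W \<subseteq> V1 \<union> V2" for B w W
    using inj_on_image_mem_iff[OF inj] sp_block_subset[OF sP that(1)] that(2) by blast
  fix B' w' assume "(B', w') \<in> sp_relabel f P"
  then obtain B w where Bw: "(B, w) \<in> P" "B' = f ` B" "w' = map_option f w"
    unfolding mem_sp_relabel_iff by blast
  show "B' \<noteq> {}" using sp_block_nonempty[OF sP Bw(1)] Bw(2) by simp
  show "B' \<subseteq> f ` V1 \<Longrightarrow> w' \<noteq> None"
    using image_subset[OF Bw(1), of V1] sp_block_in_V1_pointed[OF sP Bw(1)] Bw(2,3) by auto
  show "B' \<subseteq> f ` V2 \<Longrightarrow> w' = None"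
    using image_subset[OF Bw(1), of V2] sp_block_in_V2_unpointed[OF sP Bw(1)] Bw(2,3) by auto
next
  fix B' e' assume "(B', Some e') \<in> sp_relabel f P"
  then obtain B w where Bw: "(B, w) \<in> P" "B' = f ` B" "Some e' = map_option f w"
    unfolding mem_sp_relabel_iff by blast
  then obtain e where "(B, Some e) \<in> P" "B' = f ` B" "e' = f e" by (cases w) auto
  then show "e' \<in> B' \<and> e' \<in> f ` V1" using sp_point_in_block[OF sP] by auto
next
  fix B1 w1 B2 w2 x assume h: "(B1, w1) \<in> sp_relabel f P" "(B2, w2) \<in> sp_relabel f P" "x \<in> B1" "x \<in> B2"
  obtain C1 u1 where c1: "(C1, u1) \<in> P" "B1 = f ` C1" "w1 = map_option f u1"
    using h(1) unfolding mem_sp_relabel_iff by blast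
  obtain C2 u2 where c2: "(C2, u2) \<in> P" "B2 = f ` C2" "w2 = map_option f u2"
    using h(2) unfolding mem_sp_relabel_iff by blast
  obtain y1 y2 where y: "y1 \<in> C1" "y2 \<in> C2" "f y1 = f y2" using h(3,4) c1(2) c2(2) by blast
  then have "y1 = y2" using inj_onD[OF inj] sp_block_subset[OF sP c1(1)] sp_block_subset[OF sP c2(1)] by blast
  then show "B1 = B2 \<and> w1 = w2" using sp_blocks_eq[OF sP c1(1) c2(1)] y c1 c2 by auto
next
  have "\<Union>(fst ` sp_relabel f P) = f ` \<Union>(fst ` P)"
    unfolding sp_relabel_def by (auto simp: image_Union)
  then show "\<Union>(fst ` sp_relabel f P) = f ` V1 \<union> f ` V2" using sp_Union_blocks[OF sP] by auto
qed

lemma sp_le_sp_relabel: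
  assumes le: "sp_le P R"
  shows "sp_le (sp_relabel f P) (sp_relabel f R)"
proof (rule sp_leI)
  fix B' w' assume "(B',w') \<in> sp_relabel f P"
  then obtain B w where Bw: "(B, w) \<in> P" "B' = f ` B" "w' = map_option f w" unfolding mem_sp_relabel_iff
    by blast
  obtain S where S: "S \<subseteq> R" "B = \<Union>(fst ` S)"
     "case w of Some e \<Rightarrow> (\<exists>q. (q, Some e) \<in> S) | None \<Rightarrow> (\<exists>q. (q, None) \<in> S)"
    by (rule sp_leE[OF le Bw(1)])
  have "sp_relabel f S \<subseteq> sp_relabel f R" using S(1) unfolding sp_relabel_def by blast
  moreover have "B' = \<Union>(fst ` sp_relabel f S)"
  proof -
    have "fst ` sp_relabel f S = (\<lambda>x. f ` fst x) ` S" unfolding sp_relabel_def image_image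
      by (simp add: case_prod_beta)
    then show ?thesis using S(2) Bw(2) by (simp add: image_Union image_image)
  qed
  moreover have "case w' of Some e \<Rightarrow> (\<exists>q. (q, Some e) \<in> sp_relabel f S) | None \<Rightarrow> (\<exists>q. (q, None) \<in> sp_relabel f S)"
  proof (cases w)
    case None
    then obtain q where "(q, None) \<in> S" using S(3) by auto
    then have "(f ` q, None) \<in> sp_relabel f S" unfolding mem_sp_relabel_iff by force
    then show ?thesis using None Bw(3) by auto
  next
    case (Some e)
    then obtain q where "(q, Some e) \<in> S" using S(3) by auto
    then have "(f ` q, Some (f e)) \<in> sp_relabel f S" unfolding mem_sp_relabel_iff by force
    then show ?thesis using Some Bw(3) by auto
  qed
  ultimately show "\<exists>S'\<subseteq>sp_relabel f R. B' = \<Union>(fst ` S') \<and>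
        (case w' of Some e \<Rightarrow> (\<exists>q. (q, Some e) \<in> S') | None \<Rightarrow> (\<exists>q. (q, None) \<in> S'))" by blast
qed

lemma sp_relabel_inv:
  assumes inj: "inj_on f (V1 \<union> V2)" and sP: "semi_pointed V1 V2 P"
  shows "sp_relabel (inv_into (V1 \<union> V2) f) (sp_relabel f P) = P"
proof -
  let ?g = "inv_into (V1 \<union> V2) f"
  have "sp_relabel ?g (sp_relabel f P) = (\<lambda>x. ((\<lambda>y. ?g (f y)) ` fst x, map_option ?g (map_option f (snd x)))) ` P"
    unfolding sp_relabel_def image_image by (simp add: case_prod_beta image_image)
  also have "\<dots> = (\<lambda>x. x) ` P"
  proof (rule image_cong[OF refl])
    fix x assume x: "x \<in> P"
    obtain B w where Bw: "x = (B, w)" by (cases x)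
    have sub: "B \<subseteq> V1 \<union> V2" using sp_block_subset[OF sP] x Bw by blast
    have "(\<lambda>y. ?g (f y)) ` B = B"
    proof -
      have "(\<lambda>y. ?g (f y)) ` B = (\<lambda>y. y) ` B" using sub inj by (intro image_cong) auto
      then show ?thesis by simp
    qed
    moreover have "map_option ?g (map_option f w) = w"
    proof (cases w)
      case None then show ?thesis by simp
    next
      case (Some e)
      then have "e \<in> V1 \<union> V2" using sp_point_in_block[OF sP] x Bw Some by blast
      then show ?thesis using Some inj by simp
    qed
    ultimately show "((\<lambda>y. ?g (f y)) ` fst x, map_option ?g (map_option f (snd x))) = x" using Bw by simp
  qed
  finally show ?thesis by simp
qed

lemma map_sp_relabel_chain:
  assumes inj: "inj_on f (V1 \<union> V2)" and as: "as \<in> chains_from (SPi V1 V2) x k" and k: "k \<ge> 1"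
  shows "map (sp_relabel f) as \<in> chains_from (SPi (f ` V1) (f ` V2)) (sp_relabel f x) k"
proof -
  have len: "length as = k" and st: "set as \<subseteq> SPi V1 V2" and hd: "hd as = x"
    and ch: "\<forall>i. Suc i < k \<longrightarrow> sp_le (as ! i) (as ! Suc i)"
    using as unfolding chains_from_def mem_multichains_in_iff by auto
  have "set (map (sp_relabel f) as) \<subseteq> SPi (f ` V1) (f ` V2)"
    using st semi_pointed_sp_relabel[OF inj] by (auto simp: mem_SPi_iff)
  moreover have "hd (map (sp_relabel f) as) = sp_relabel f x" using len k hd by (cases as) auto
  ultimately show ?thesis
    using len ch unfolding chains_from_def mem_multichains_in_iff by (auto intro: sp_le_sp_relabel)
qed

lemma single_block_chains_relabel_le:
  assumes fin: "finite V1" "finite V2" and inj: "inj_on f (V1 \<union> V2)" and k: "k \<ge> 1"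
  shows "single_block_chains V1 V2 w k \<le> single_block_chains (f ` V1) (f ` V2) (map_option f w) k"
proof -
  let ?A = "chains_from (SPi V1 V2) {(V1 \<union> V2, w)} k"
  have single: "sp_relabel f {(V1 \<union> V2, w)} = {(f ` V1 \<union> f ` V2, map_option f w)}"
    by (simp add: sp_relabel_def image_Un)
  have "inj_on (map (sp_relabel f)) ?A"
  proof (rule inj_onI)
    fix as bs assume as: "as \<in> ?A" and bs: "bs \<in> ?A" and e: "map (sp_relabel f) as = map (sp_relabel f) bs"
    have "map (sp_relabel (inv_into (V1 \<union> V2) f)) (map (sp_relabel f) cs) = cs" if "cs \<in> ?A" for cs
      using that sp_relabel_inv[OF inj] unfolding chains_from_def mem_multichains_in_iff
      by (auto simp: map_idI mem_SPi_iff subset_iff)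
    then show "as = bs" using as bs e by metis
  qed
  moreover have "map (sp_relabel f) ` ?A \<subseteq> chains_from (SPi (f ` V1) (f ` V2)) {(f ` V1 \<union> f ` V2, map_option f w)} k"
    using map_sp_relabel_chain[OF inj _ k, of _ "{(V1 \<union> V2, w)}"] single by auto
  ultimately show ?thesis
    unfolding single_block_chains_def
    by (rule card_inj_on_le) (use finite_chains_from[OF finite_SPi] fin in blast)
qed

lemma single_block_chains_relabel:
  assumes fin: "finite V1" "finite V2" and inj: "inj_on f (V1 \<union> V2)" and k: "k \<ge> 1"
    and w: "set_option w \<subseteq> V1 \<union> V2"
  shows "single_block_chains V1 V2 w k = single_block_chains (f ` V1) (f ` V2) (map_option f w) k"
proof (rule antisym)
  show "single_block_chains V1 V2 w k \<le> single_block_chains (f ` V1) (f ` V2) (map_option f w) k"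
    by (rule single_block_chains_relabel_le[OF fin inj k])
  let ?g = "inv_into (V1 \<union> V2) f"
  have inj': "inj_on ?g (f ` V1 \<union> f ` V2)" by (rule inj_on_inv_into) auto
  have g1: "?g ` f ` V1 = V1" using inv_into_image_cancel[OF inj, of V1] by simp
  have g2: "?g ` f ` V2 = V2" using inv_into_image_cancel[OF inj, of V2] by simp
  have gw: "map_option ?g (map_option f w) = w" using w inj by (cases w) auto
  have "single_block_chains (f ` V1) (f ` V2) (map_option f w) k
      \<le> single_block_chains (?g ` f ` V1) (?g ` f ` V2) (map_option ?g (map_option f w)) k"
    by (rule single_block_chains_relabel_le[OF _ _ inj' k]) (use fin in auto)
  then show "single_block_chains (f ` V1) (f ` V2) (map_option f w) k \<le> single_block_chains V1 V2 w k"
    using g1 g2 gw by simp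
qed

lemma ex_canonical_relabel:
  assumes fin: "finite W1" "finite W2" and D: "W1 \<inter> W2 = {}"
  shows "\<exists>f :: 'a \<Rightarrow> nat. inj_on f (W1 \<union> W2) \<and> f ` W1 = V1c (card W1) \<and> f ` W2 = V2c (card W1) (card W2)"
proof -
  obtain h1 where h1: "bij_betw h1 W1 {0..<card W1}" using ex_bij_betw_finite_nat[OF fin(1)] by blast
  obtain h2 where h2: "bij_betw h2 W2 {0..<card W2}" using ex_bij_betw_finite_nat[OF fin(2)] by blast
  define f where "f x = (if x \<in> W1 then h1 x else card W1 + h2 x)" for x
  have i1: "f ` W1 = V1c (card W1)" using h1 unfolding f_def V1c_def bij_betw_def
    by (auto simp: atLeast0LessThan)
  have "f ` W2 = (\<lambda>x. card W1 + h2 x) ` W2" using D unfolding f_def by (auto intro!: image_cong)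
  also have "\<dots> = (\<lambda>y. card W1 + y) ` {0..<card W2}" using h2 unfolding bij_betw_def
    by (simp add: image_image[symmetric])
  also have "\<dots> = V2c (card W1) (card W2)" unfolding V2c_def
    by (simp add: image_add_atLeastLessThan add.commute)
  finally have i2: "f ` W2 = V2c (card W1) (card W2)" .
  have "inj_on f (W1 \<union> W2)"
  proof (rule inj_onI)
    fix x y assume x: "x \<in> W1 \<union> W2" and y: "y \<in> W1 \<union> W2" and e: "f x = f y"
    have r1: "h1 z < card W1" if "z \<in> W1" for z using h1 that unfolding bij_betw_def by auto
    consider "x \<in> W1" "y \<in> W1" | "x \<in> W1" "y \<notin> W1" | "x \<notin> W1" "y \<in> W1" | "x \<notin> W1" "y \<notin> W1" by blast
    then show "x = y"
    proof cases
      case 1 then show ?thesis using e h1 unfolding f_def bij_betw_def by (auto dest: inj_onD)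
    next
      case 2 then show ?thesis using e r1[OF 2(1)] unfolding f_def by simp
    next
      case 3 then show ?thesis using e r1[OF 3(2)] unfolding f_def by simp
    next
      case 4 then have "x \<in> W2" "y \<in> W2" using x y by auto
      then show ?thesis using 4 e h2 unfolding f_def bij_betw_def by (auto dest: inj_onD)
    qed
  qed
  then show ?thesis using i1 i2 by blast
qed

lemma cnt_cross_eq_single_block_chains: "cnt_cross p q k = single_block_chains (V1c p) (V2c p q) None k"
  unfolding cnt_cross_def single_block_chains_def chains_from_def m_cross_def by simp

lemma V1c_V2c_disjoint: "V1c p \<inter> V2c p q = {}"
  unfolding V1c_def V2c_def by auto

lemma finite_V1c: "finite (V1c p)"
  unfolding V1c_def by simp

lemma finite_V2c: "finite (V2c p q)"
  unfolding V2c_def by simp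

lemma card_V1c [simp]: "card (V1c p) = p"
  unfolding V1c_def by simp

lemma card_V2c [simp]: "card (V2c p q) = q"
  unfolding V2c_def by simp

lemma cnt_bullet_eq_sum_single_block_chains:
  "cnt_bullet p q k = (\<Sum>v\<in>V1c p. single_block_chains (V1c p) (V2c p q) (Some v) k)"
proof -
  let ?S = "SPi (V1c p) (V2c p q)"
  let ?C = "\<lambda>v. chains_from ?S {(V1c p \<union> V2c p q, Some v)} k"
  have "{as \<in> multichains_in ?S k. \<exists>v \<in> V1c p. hd as = m_pt (V1c p) (V2c p q) v} = (\<Union>v\<in>V1c p. ?C v)"
    unfolding chains_from_def m_pt_def by blast
  moreover have "card (\<Union>v\<in>V1c p. ?C v) = (\<Sum>v\<in>V1c p. card (?C v))"
    using finite_chains_from[OF finite_SPi[OF finite_V1c finite_V2c]]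
    by (intro card_UN_disjoint) (auto simp: finite_V1c chains_from_def)
  ultimately show ?thesis unfolding cnt_bullet_def single_block_chains_def by simp
qed

lemma single_block_chains_None_eq_cnt_cross:
  assumes fin: "finite W1" "finite W2" and D: "W1 \<inter> W2 = {}" and k: "k \<ge> 1"
  shows "single_block_chains W1 W2 None k = cnt_cross (card W1) (card W2) k"
proof -
  obtain f :: "'a \<Rightarrow> nat"
    where f: "inj_on f (W1 \<union> W2)" "f ` W1 = V1c (card W1)" "f ` W2 = V2c (card W1) (card W2)"
    using ex_canonical_relabel[OF fin D] by blast
  show ?thesis
    using single_block_chains_relabel[OF fin f(1) k, of None] f(2, 3) cnt_cross_eq_single_block_chains by simp
qed

lemma sum_single_block_chains_Some_eq_cnt_bullet:
  assumes fin: "finite W1" "finite W2" and D: "W1 \<inter> W2 = {}" and k: "k \<ge> 1"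
  shows "(\<Sum>v\<in>W1. single_block_chains W1 W2 (Some v) k) = cnt_bullet (card W1) (card W2) k"
proof -
  obtain f :: "'a \<Rightarrow> nat"
    where f: "inj_on f (W1 \<union> W2)" "f ` W1 = V1c (card W1)" "f ` W2 = V2c (card W1) (card W2)"
    using ex_canonical_relabel[OF fin D] by blast
  have "(\<Sum>v\<in>W1. single_block_chains W1 W2 (Some v) k)
      = (\<Sum>v\<in>W1. single_block_chains (V1c (card W1)) (V2c (card W1) (card W2)) (Some (f v)) k)"
    using single_block_chains_relabel[OF fin f(1) k] f(2, 3) by (intro sum.cong) auto
  also have "\<dots> = (\<Sum>v'\<in>f ` W1. single_block_chains (V1c (card W1)) (V2c (card W1) (card W2)) (Some v') k)"
    by (rule sum.reindex[symmetric, unfolded comp_def]) (use f(1) inj_on_subset in blast)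
  also have "\<dots> = cnt_bullet (card W1) (card W2) k" using f(2) cnt_bullet_eq_sum_single_block_chains by simp
  finally show ?thesis .
qed

section \<open>The recursions for natural k\<close>

definition chain_weight :: "'a set \<Rightarrow> 'a set \<Rightarrow> nat \<Rightarrow> 'a set \<times> 'a option \<Rightarrow> rat" where
  "chain_weight V1 V2 k y = of_nat (single_block_chains (fst y \<inter> V1) (fst y \<inter> V2) (snd y) k)"

lemma single_block_chains_None_empty: "k \<ge> 1 \<Longrightarrow> single_block_chains A1 {} None k = 0"
  unfolding single_block_chains_def
  using sp_block_in_V1_pointed[of A1 "{}" "{(A1 \<union> {}, None)}"]
  by (subst chains_from_empty) (auto simp: mem_SPi_iff)

lemma card_chains_from_eq_prod_chain_weight:
  assumes fin: "finite V1" "finite V2" and k: "k \<ge> 1" and R: "R \<in> SPi V1 V2"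
  shows "of_nat (card (chains_from (SPi V1 V2) R k)) = (\<Prod>y\<in>R. chain_weight V1 V2 k y)"
proof -
  have "fst y \<inter> V1 \<union> fst y \<inter> V2 = fst y" if "y \<in> R" for y
    using sp_block_subset[of V1 V2 R "fst y" "snd y"] R that by (auto simp: mem_SPi_iff)
  then show ?thesis
    unfolding card_chains_from_eq_prod_blocks[OF fin R k] chain_weight_def single_block_chains_def
    by simp
qed

lemma sp_le_single_block_iff:
  assumes sR: "semi_pointed V1 V2 R"
  shows "sp_le {(V1 \<union> V2, w)} R \<longleftrightarrow> (\<exists>y\<in>R. snd y = w)"
proof
  assume "sp_le {(V1 \<union> V2, w)} R"
  then obtain S where "S \<subseteq> R" "case w of Some e \<Rightarrow> (\<exists>q. (q, Some e) \<in> S) | None \<Rightarrow> (\<exists>q. (q, None) \<in> S)"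
    by (rule sp_leE) simp
  then show "\<exists>y\<in>R. snd y = w" by (cases w) force+
next
  assume "\<exists>y\<in>R. snd y = w"
  then show "sp_le {(V1 \<union> V2, w)} R"
    using sp_Union_blocks[OF sR] by (intro sp_leI exI[of _ R]) (auto split: option.split)
qed

lemma single_block_chains_Suc:
  assumes fin: "finite V1" "finite V2" and k: "k \<ge> 1" and m: "{(V1 \<union> V2, w)} \<in> SPi V1 V2"
  shows "of_nat (single_block_chains V1 V2 w (Suc k))
    = (\<Sum>R\<in>{R\<in>SPi V1 V2. \<exists>y\<in>R. snd y = w}. \<Prod>y\<in>R. chain_weight V1 V2 k y)"
proof -
  have "{R\<in>SPi V1 V2. sp_le {(V1 \<union> V2, w)} R} = {R\<in>SPi V1 V2. \<exists>y\<in>R. snd y = w}"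
    by (force simp: mem_SPi_iff sp_le_single_block_iff)
  then show ?thesis
    unfolding single_block_chains_def card_chains_from_Suc[OF m k finite_SPi[OF fin]]
    by (simp add: card_chains_from_eq_prod_chain_weight[OF fin k])
qed

lemma single_block_chains_None_Suc:
  assumes fin: "finite V1" "finite V2" and D: "V1 \<inter> V2 = {}" and k: "k \<ge> 1"
  shows "of_nat (single_block_chains V1 V2 None (Suc k))
    = (\<Sum>R\<in>{R\<in>SPi V1 V2. \<exists>y\<in>R. snd y = None}. \<Prod>y\<in>R. chain_weight V1 V2 k y)"
proof (cases "V2 = {}")
  case True
  have "\<not> semi_pointed V1 {} R" if "(B, None) \<in> R" for B R
    using that sp_block_in_V1_pointed[of V1 "{}" R B None] sp_block_subset[of V1 "{}" R B None] by auto
  then show ?thesis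
    using True single_block_chains_None_empty[of "Suc k" V1] by (force simp: mem_SPi_iff intro: sum.neutral)
next
  case False
  then have "{(V1 \<union> V2, None)} \<in> SPi V1 V2"
    using semi_pointed_single_block_iff[OF D] by (auto simp: mem_SPi_iff sp_pointings_def)
  then show ?thesis by (rule single_block_chains_Suc[OF fin k])
qed

text \<open>The (unnormalised) coefficients of \<open>C\<^sup>\<bullet>\<^sub>k\<close>, \<open>C\<^sup>\<times>\<^sub>k\<close> and
  \<open>C\<^sup>\<bullet>\<^sub>k + C\<^sup>\<times>\<^sub>k\<close> for natural k.\<close>

definition nbullet :: "nat \<Rightarrow> nat \<Rightarrow> nat \<Rightarrow> rat" where
  "nbullet k p q = of_nat (cnt_bullet p q k)"

definition ncross :: "nat \<Rightarrow> nat \<Rightarrow> nat \<Rightarrow> rat" where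
  "ncross k p q = of_nat (cnt_cross p q k)"

definition nmin :: "nat \<Rightarrow> nat \<Rightarrow> nat \<Rightarrow> rat" where
  "nmin k p q = nbullet k p q + ncross k p q"

lemma nbullet_0_0: "nbullet k 0 0 = 0"
  unfolding nbullet_def cnt_bullet_eq_sum_single_block_chains V1c_def by simp

lemma ncross_right_0: "k \<ge> 1 \<Longrightarrow> ncross k p 0 = 0"
  unfolding ncross_def cnt_cross_eq_single_block_chains V2c_def using single_block_chains_None_empty by simp

lemma chain_weight_pointings:
  assumes fin: "finite V1" "finite V2" and D: "V1 \<inter> V2 = {}" and k: "k \<ge> 1"
  shows "(\<Sum>v\<in>A \<inter> V1. chain_weight V1 V2 k (A, Some v)) = nbullet k (card (A \<inter> V1)) (card (A \<inter> V2))"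
    and "(if A \<inter> V2 = {} then 0 else chain_weight V1 V2 k (A, None)) = ncross k (card (A \<inter> V1)) (card (A \<inter> V2))"
proof -
  have f: "finite (A \<inter> V1)" "finite (A \<inter> V2)" and d: "(A \<inter> V1) \<inter> (A \<inter> V2) = {}" using fin D by auto
  show "(\<Sum>v\<in>A \<inter> V1. chain_weight V1 V2 k (A, Some v)) = nbullet k (card (A \<inter> V1)) (card (A \<inter> V2))"
    using sum_single_block_chains_Some_eq_cnt_bullet[OF f d k] unfolding chain_weight_def nbullet_def
    by (metis (no_types, lifting) fst_conv of_nat_sum snd_conv sum.cong)
  show "(if A \<inter> V2 = {} then 0 else chain_weight V1 V2 k (A, None)) = ncross k (card (A \<inter> V1)) (card (A \<inter> V2))"
    using single_block_chains_None_eq_cnt_cross[OF f d k] single_block_chains_None_empty[OF k, of "A \<inter> V1"]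
    unfolding chain_weight_def ncross_def by auto
qed

lemma sum_pointings_chain_weight:
  assumes fin: "finite V1" "finite V2" and D: "V1 \<inter> V2 = {}" and k: "k \<ge> 1"
  shows "(\<Sum>u\<in>sp_pointings (A \<inter> V1) (A \<inter> V2). chain_weight V1 V2 k (A, u))
      = nmin k (card (A \<inter> V1)) (card (A \<inter> V2))"
    and "(\<Sum>u\<in>sp_pointings (A \<inter> V1) (A \<inter> V2). if u = None then chain_weight V1 V2 k (A, u) else 0)
      = ncross k (card (A \<inter> V1)) (card (A \<inter> V2))"
    and "(\<Sum>u\<in>sp_pointings (A \<inter> V1) (A \<inter> V2). if u = None then 0 else chain_weight V1 V2 k (A, u))
      = nbullet k (card (A \<inter> V1)) (card (A \<inter> V2))"
  using chain_weight_pointings[OF fin D k, of A] fin ncross_right_0[OF k]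
  by (cases "A \<inter> V2 = {}"; simp add: sum_sp_pointings nmin_def)+

lemma fact_mult_egf_nbullet: "fact p * fact q * egf (nbullet k) p q = nbullet k p q"
  by (simp add: fact_mult_egf nbullet_0_0)

lemma cnt_eq_fact_mult_bexp:
  assumes k: "k \<ge> 1"
  shows "of_nat (cnt p q k) = fact p * fact q * bexp (egf (nmin k)) p q"
proof -
  note fin = finite_V1c[of p] finite_V2c[of p q] and D = V1c_V2c_disjoint[of p q]
  have "of_nat (cnt p q k) = (\<Sum>R\<in>SPi (V1c p) (V2c p q). of_nat (card (chains_from (SPi (V1c p) (V2c p q)) R k)) :: rat)"
    unfolding cnt_def card_multichains_in[OF k finite_SPi[OF fin]] by simp
  also have "\<dots> = partition_weight (V1c p) (V2c p q) (chain_weight (V1c p) (V2c p q) k)"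
    unfolding partition_weight_def by (intro sum.cong refl card_chains_from_eq_prod_chain_weight[OF fin k])
  also have "\<dots> = fact p * fact q * bexp (egf (nmin k)) p q"
    using partition_weight_exp[OF fin D sum_pointings_chain_weight(1)[OF fin D k]] by simp
  finally show ?thesis .
qed

lemma m_pt_in_SPi: "v \<in> V1c p \<Longrightarrow> {(V1c p \<union> V2c p q, Some v)} \<in> SPi (V1c p) (V2c p q)"
  using semi_pointed_single_block_iff[OF V1c_V2c_disjoint] unfolding mem_SPi_iff sp_pointings_def by auto

lemma m_cross_in_SPi: "q > 0 \<Longrightarrow> {(V1c p \<union> V2c p q, None)} \<in> SPi (V1c p) (V2c p q)"
  using semi_pointed_single_block_iff[OF V1c_V2c_disjoint] unfolding mem_SPi_iff sp_pointings_def
  by (auto simp: V2c_def)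

lemma cnt_bullet_Suc_eq_fact_mult_bmul:
  assumes k: "k \<ge> 1"
  shows "of_nat (cnt_bullet p q (Suc k)) = fact p * fact q * bmul (egf (nbullet k)) (bexp (egf (nmin k))) p q"
proof -
  let ?V1 = "V1c p" and ?V2 = "V2c p q"
  let ?w = "chain_weight ?V1 ?V2 k" and ?E = "bexp (egf (nmin k))"
  note fin = finite_V1c[of p] finite_V2c[of p q] and D = V1c_V2c_disjoint[of p q]
  have "of_nat (cnt_bullet p q (Suc k)) = (\<Sum>v\<in>?V1. of_nat (single_block_chains ?V1 ?V2 (Some v) (Suc k)) :: rat)"
    unfolding cnt_bullet_eq_sum_single_block_chains by simp
  also have "\<dots> = (\<Sum>v\<in>?V1. \<Sum>A\<in>{A\<in>Pow (?V1 \<union> ?V2). v \<in> A}. ?w (A, Some v) * partition_weight (?V1 - A) (?V2 - A) ?w)"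
    using single_block_chains_Suc[OF fin k m_pt_in_SPi] sum_SPi_pointed_at[OF fin D] by simp
  also have "\<dots> = (\<Sum>A\<in>Pow (?V1 \<union> ?V2). \<Sum>v\<in>{v\<in>?V1. v \<in> A}. ?w (A, Some v) * partition_weight (?V1 - A) (?V2 - A) ?w)"
    by (rule sum.swap_restrict) (use fin in auto)
  also have "\<dots> = (\<Sum>A\<in>Pow (?V1 \<union> ?V2). (\<Sum>v\<in>A \<inter> ?V1. ?w (A, Some v)) * partition_weight (?V1 - A) (?V2 - A) ?w)"
    unfolding sum_distrib_right by (intro sum.cong) auto
  also have "\<dots> = (\<Sum>A\<in>Pow (?V1 \<union> ?V2).
      (fact (card (A \<inter> ?V1)) * fact (card (A \<inter> ?V2)) * egf (nbullet k) (card (A \<inter> ?V1)) (card (A \<inter> ?V2)))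
      * (fact (card (?V1 - A)) * fact (card (?V2 - A)) * ?E (card (?V1 - A)) (card (?V2 - A))))"
  proof (intro sum.cong refl arg_cong2[where f = "(*)"])
    fix A
    show "(\<Sum>v\<in>A \<inter> ?V1. ?w (A, Some v))
        = fact (card (A \<inter> ?V1)) * fact (card (A \<inter> ?V2)) * egf (nbullet k) (card (A \<inter> ?V1)) (card (A \<inter> ?V2))"
      unfolding fact_mult_egf_nbullet by (rule chain_weight_pointings(1)[OF fin D k])
    show "partition_weight (?V1 - A) (?V2 - A) ?w
        = fact (card (?V1 - A)) * fact (card (?V2 - A)) * ?E (card (?V1 - A)) (card (?V2 - A))"
      by (rule partition_weight_exp_subset[OF fin D _ _ sum_pointings_chain_weight(1)[OF fin D k]]) auto
  qed
  also have "\<dots> = fact p * fact q * bmul (egf (nbullet k)) ?E p q"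
    using sum_Pow_Un_fact_mult_bmul[OF fin D] by simp
  finally show ?thesis .
qed

lemma cnt_cross_Suc_eq_fact_mult_bmul:
  assumes k: "k \<ge> 1"
  shows "of_nat (cnt_cross p q (Suc k))
    = fact p * fact q * bmul (bexp (egf (nbullet k))) (bsub (bexp (egf (ncross k))) bone) p q"
proof -
  let ?V1 = "V1c p" and ?V2 = "V2c p q"
  let ?w = "chain_weight ?V1 ?V2 k"
  let ?wX = "\<lambda>y. if snd y = None then ?w y else 0" and ?wB = "\<lambda>y. if snd y = None then 0 else ?w y"
  let ?X = "bexp (egf (ncross k))" and ?B = "bexp (egf (nbullet k))"
  note fin = finite_V1c[of p] finite_V2c[of p q] and D = V1c_V2c_disjoint[of p q]
  have expX: "partition_weight W1 W2 ?wX = fact (card W1) * fact (card W2) * ?X (card W1) (card W2)"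
    and expB: "partition_weight W1 W2 ?wB = fact (card W1) * fact (card W2) * ?B (card W1) (card W2)"
    if "W1 \<subseteq> ?V1" "W2 \<subseteq> ?V2" for W1 W2
    using partition_weight_exp_subset[OF fin D that, of ?wX] partition_weight_exp_subset[OF fin D that, of ?wB]
      sum_pointings_chain_weight(2,3)[OF fin D k] by simp_all
  have "of_nat (cnt_cross p q (Suc k)) = (\<Sum>R\<in>{R\<in>SPi ?V1 ?V2. \<exists>y\<in>R. snd y = None}. \<Prod>y\<in>R. ?w y)"
    unfolding cnt_cross_eq_single_block_chains by (rule single_block_chains_None_Suc[OF fin D k])
  also have "\<dots> = partition_weight ?V1 ?V2 ?w - partition_weight ?V1 ?V2 ?wB"
    by (rule sum_SPi_with_block[OF fin])
  also have "partition_weight ?V1 ?V2 ?w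
      = (\<Sum>A\<in>Pow (?V1 \<union> ?V2). partition_weight (A \<inter> ?V1) (A \<inter> ?V2) ?wX * partition_weight (?V1 - A) (?V2 - A) ?wB)"
    by (rule partition_weight_split[OF fin])
  also have "\<dots> = fact p * fact q * bmul ?X ?B p q"
    using sum_Pow_Un_fact_mult_bmul[OF fin D, of ?X ?B] by (simp add: expX expB)
  also have "partition_weight ?V1 ?V2 ?wB = fact p * fact q * ?B p q"
    using expB[of ?V1 ?V2] by simp
  finally have "of_nat (cnt_cross p q (Suc k)) = fact p * fact q * (bmul ?X ?B p q - ?B p q)"
    by (simp add: algebra_simps)
  also have "bmul ?X ?B p q - ?B p q = bmul ?B (bsub ?X bone) p q"
    unfolding bmul_bsub_bone bmul_comm[of ?X] by (simp add: bsub_def)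
  finally show ?thesis .
qed

lemma sp_le_sp_top:
  assumes sP: "semi_pointed V1 V2 P"
  shows "sp_le P (sp_top V1 V2)"
proof (rule sp_leI)
  fix b w assume bw: "(b, w) \<in> P"
  let ?S = "(\<lambda>v. ({v}, if v \<in> V1 then Some v else None)) ` b"
  have "?S \<subseteq> sp_top V1 V2" using sp_block_subset[OF sP bw] unfolding sp_top_def by auto
  moreover have "case w of Some e \<Rightarrow> (\<exists>q. (q, Some e) \<in> ?S) | None \<Rightarrow> (\<exists>q. (q, None) \<in> ?S)"
  proof (cases w)
    case None
    then obtain v where "v \<in> b" "v \<notin> V1" using sp_block_in_V1_pointed[OF sP bw] by blast
    then show ?thesis using None by force
  next
    case (Some e)
    then show ?thesis using sp_point_in_block[OF sP] bw by force
  qed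
  ultimately show "\<exists>S\<subseteq>sp_top V1 V2. b = \<Union>(fst ` S) \<and>
      (case w of Some e \<Rightarrow> (\<exists>q. (q, Some e) \<in> S) | None \<Rightarrow> (\<exists>q. (q, None) \<in> S))"
    by (intro exI[of _ ?S]) auto
qed

lemma chains_from_up_set:
  assumes m: "m \<in> SPi V1 V2" and y: "y \<in> SPi V1 V2" "sp_le m y"
  shows "chains_from {x \<in> SPi V1 V2. sp_le m x} y k = chains_from (SPi V1 V2) y k"
proof
  show "chains_from {x \<in> SPi V1 V2. sp_le m x} y k \<subseteq> chains_from (SPi V1 V2) y k"
    unfolding chains_from_def mem_multichains_in_iff by auto
  show "chains_from (SPi V1 V2) y k \<subseteq> chains_from {x \<in> SPi V1 V2. sp_le m x} y k"
  proof
    fix as assume as: "as \<in> chains_from (SPi V1 V2) y k"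
    have sm: "semi_pointed V1 V2 m" and sy: "semi_pointed V1 V2 y" using m y by (auto simp: mem_SPi_iff)
    have "sp_le m (as ! i)" if "i < k" for i
      using sp_le_alt_trans[OF sp_le_iff_alt[OF sm sy, THEN iffD1, OF y(2)] chains_from_nth(2)[OF as that]]
        sp_le_iff_alt[OF sm chains_from_nth(1)[OF as that]] by simp
    then have "set as \<subseteq> {x \<in> SPi V1 V2. sp_le m x}"
      using as unfolding chains_from_def mem_multichains_in_iff by (auto simp: in_set_conv_nth)
    then show "as \<in> chains_from {x \<in> SPi V1 V2. sp_le m x} y k"
      using as unfolding chains_from_def mem_multichains_in_iff by auto
  qed
qed

lemma card_multichains_interval_sp_top:
  assumes fin: "finite V1" "finite V2" and m: "m \<in> SPi V1 V2" and k: "k \<ge> 1"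
  shows "card (multichains_in (sp_interval V1 V2 m (sp_top V1 V2)) k) = card (chains_from (SPi V1 V2) m (Suc k))"
proof -
  let ?I = "{x \<in> SPi V1 V2. sp_le m x}"
  have "sp_interval V1 V2 m (sp_top V1 V2) = ?I"
    unfolding sp_interval_def using sp_le_sp_top by (auto simp: mem_SPi_iff)
  then have "card (multichains_in (sp_interval V1 V2 m (sp_top V1 V2)) k) = (\<Sum>y\<in>?I. card (chains_from ?I y k))"
    using card_multichains_in[OF k, of ?I] finite_SPi[OF fin] by simp
  also have "\<dots> = (\<Sum>y\<in>?I. card (chains_from (SPi V1 V2) y k))"
    using chains_from_up_set[OF m] by simp
  also have "\<dots> = card (chains_from (SPi V1 V2) m (Suc k))"
    using card_chains_from_Suc[OF m k finite_SPi[OF fin]] by simp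
  finally show ?thesis .
qed

lemma cnt_ell_eq:
  assumes k: "k \<ge> 1"
  shows "cnt_ell p q k = cnt_bullet p q (Suc k) + cnt_cross p q (Suc k)"
proof -
  let ?V1 = "V1c p" and ?V2 = "V2c p q"
  let ?f = "\<lambda>m. card (multichains_in (sp_interval ?V1 ?V2 m (sp_top ?V1 ?V2)) k)"
  note fin = finite_V1c[of p] finite_V2c[of p q]
  have "cnt_ell p q k = (\<Sum>m\<in>m_pt ?V1 ?V2 ` ?V1. ?f m) + (\<Sum>m\<in>(if ?V2 \<noteq> {} then {m_cross ?V1 ?V2} else {}). ?f m)"
    unfolding cnt_ell_def sp_minimals_def
    by (rule sum.union_disjoint) (auto simp: fin m_pt_def m_cross_def)
  also have "(\<Sum>m\<in>m_pt ?V1 ?V2 ` ?V1. ?f m) = cnt_bullet p q (Suc k)"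
    unfolding cnt_bullet_eq_sum_single_block_chains single_block_chains_def
    using card_multichains_interval_sp_top[OF fin m_pt_in_SPi k]
    by (subst sum.reindex) (auto simp: inj_on_def m_pt_def)
  also have "(\<Sum>m\<in>(if ?V2 \<noteq> {} then {m_cross ?V1 ?V2} else {}). ?f m) = cnt_cross p q (Suc k)"
  proof (cases "q > 0")
    case True
    then show ?thesis
      using card_multichains_interval_sp_top[OF fin m_cross_in_SPi[OF True] k]
      unfolding cnt_cross_eq_single_block_chains single_block_chains_def m_cross_def by (simp add: V2c_def)
  next
    case False
    then show ?thesis
      unfolding cnt_cross_eq_single_block_chains using single_block_chains_None_empty[of "Suc k" ?V1]
      by (simp add: V2c_def)
  qed
  finally show ?thesis .
qed

section \<open>Polynomiality in k\<close>

definition falling_poly :: "nat \<Rightarrow> rat poly" where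
  "falling_poly d = (\<Prod>i<d. [:- of_nat i, 1:])"

lemma poly_falling_poly: "poly (falling_poly d) x = (\<Prod>i<d. x - of_nat i)"
  unfolding falling_poly_def poly_prod by simp

lemma falling_poly_diff:
  "poly (falling_poly (Suc d)) (x + 1) - poly (falling_poly (Suc d)) x = of_nat (Suc d) * poly (falling_poly d) x"
proof -
  have a: "poly (falling_poly (Suc d)) (x + 1) = (x + 1) * poly (falling_poly d) x"
    unfolding poly_falling_poly prod.lessThan_Suc_shift by simp
  have b: "poly (falling_poly (Suc d)) x = poly (falling_poly d) x * (x - of_nat d)"
    unfolding poly_falling_poly by simp
  show ?thesis unfolding a b by (simp add: algebra_simps)
qed

lemma degree_falling_poly: "degree (falling_poly d) = d"
  and lead_coeff_falling_poly: "lead_coeff (falling_poly d) = 1"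
proof -
  have nz: "\<forall>i\<in>{..<d}. [:- of_nat i, 1:] \<noteq> (0 :: rat poly)" by simp
  show "degree (falling_poly d) = d" unfolding falling_poly_def degree_prod_eq_sum_degree[OF nz] by simp
  show "lead_coeff (falling_poly d) = 1" unfolding falling_poly_def lead_coeff_prod by simp
qed

lemma ex_poly_antidifference: "\<exists>T :: rat poly. \<forall>x. poly T (x + 1) = poly T x + poly R x"
proof (induction "degree R" arbitrary: R rule: less_induct)
  case less
  show ?case
  proof (cases "R = 0")
    case True then show ?thesis by (intro exI[of _ 0]) simp
  next
    case False
    let ?d = "degree R" and ?c = "lead_coeff R"
    define R' where "R' = R - smult ?c (falling_poly ?d)"
    have cR': "coeff R' n = 0" if "n \<ge> ?d" for n
    proof (cases "n = ?d")
      case True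
      then show ?thesis unfolding R'_def using lead_coeff_falling_poly[of ?d] degree_falling_poly[of ?d]
        by simp
    next
      case False
      then have "n > ?d" using that by simp
      then have "coeff R n = 0" "coeff (falling_poly ?d) n = 0" using degree_falling_poly[of ?d]
        by (auto intro: coeff_eq_0)
      then show ?thesis unfolding R'_def by simp
    qed
    obtain T' where T': "\<forall>x. poly T' (x + 1) = poly T' x + poly R' x"
    proof (cases "?d = 0")
      case True
      then have "R' = 0" using cR' by (intro poly_eqI) simp
      then show ?thesis using that[of 0] by simp
    next
      case False
      have "degree R' \<le> ?d - 1" by (rule degree_le) (use cR' False in auto)
      then have "degree R' < ?d" using False by simp
      then show ?thesis using less.hyps that by blast
    qed
    define T where "T = T' + smult (?c / of_nat (Suc ?d)) (falling_poly (Suc ?d))"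
    have "poly T (x + 1) = poly T x + poly R x" for x
    proof -
      have "poly T (x + 1) - poly T x = poly R' x
          + (?c / of_nat (Suc ?d)) * (poly (falling_poly (Suc ?d)) (x + 1) - poly (falling_poly (Suc ?d)) x)"
        unfolding T_def using T'[rule_format, of x] by (simp add: algebra_simps)
      also have "\<dots> = poly R' x + ?c * poly (falling_poly ?d) x"
        unfolding falling_poly_diff by (simp del: of_nat_Suc)
      also have "\<dots> = poly R x" unfolding R'_def by simp
      finally show ?thesis by simp
    qed
    then show ?thesis by blast
  qed
qed

lemma poly_eqI_of_nat_ge:
  fixes P Q :: "rat poly"
  assumes "\<And>n. n \<ge> N \<Longrightarrow> poly P (of_nat n) = poly Q (of_nat n)"
  shows "P = Q"
proof (rule ccontr)
  assume "P \<noteq> Q"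
  then have "finite {x. poly (P - Q) x = 0}" by (intro poly_roots_finite) simp
  moreover have "range (\<lambda>n. of_nat (n + N) :: rat) \<subseteq> {x. poly (P - Q) x = 0}"
  proof
    fix x assume "x \<in> range (\<lambda>n. of_nat (n + N) :: rat)"
    then obtain n where "x = of_nat (n + N)" by blast
    then show "x \<in> {x. poly (P - Q) x = 0}" using assms[of "n + N"] by simp
  qed
  moreover have "infinite (range (\<lambda>n. of_nat (n + N) :: rat))"
    by (rule range_inj_infinite) (simp add: inj_on_def)
  ultimately show False using finite_subset by blast
qed

definition poly_on_pos :: "(nat \<Rightarrow> nat) \<Rightarrow> bool" where
  "poly_on_pos g \<longleftrightarrow> (\<exists>P :: rat poly. \<forall>n\<ge>1. poly P (of_nat n) = of_nat (g n))"

lemma poly_on_pos_sum: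
  assumes "finite A" "\<And>a. a \<in> A \<Longrightarrow> poly_on_pos (g a)"
  shows "poly_on_pos (\<lambda>n. \<Sum>a\<in>A. g a n)"
proof -
  obtain P :: "_ \<Rightarrow> rat poly" where "\<forall>a\<in>A. \<forall>n\<ge>1. poly (P a) (of_nat n) = of_nat (g a n)"
    using assms(2) unfolding poly_on_pos_def by metis
  then show ?thesis unfolding poly_on_pos_def
    by (intro exI[of _ "\<Sum>a\<in>A. P a"]) (simp add: poly_sum)
qed

lemma poly_on_pos_Suc:
  assumes "poly_on_pos g"
  shows "poly_on_pos (\<lambda>n. g (Suc n))"
proof -
  obtain P :: "rat poly" where P: "\<And>n. n \<ge> 1 \<Longrightarrow> poly P (of_nat n) = of_nat (g n)"
    using assms unfolding poly_on_pos_def by blast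
  have "poly (pcompose P [:1, 1:]) (of_nat n) = of_nat (g (Suc n))" for n
    using P[of "Suc n"] by (simp add: poly_pcompose add.commute)
  then show ?thesis unfolding poly_on_pos_def by blast
qed

lemma poly_on_pos_add:
  assumes "poly_on_pos f" "poly_on_pos g"
  shows "poly_on_pos (\<lambda>n. f n + g n)"
proof -
  obtain P Q :: "rat poly" where "\<forall>n\<ge>1. poly P (of_nat n) = of_nat (f n)" "\<forall>n\<ge>1. poly Q (of_nat n) = of_nat (g n)"
    using assms unfolding poly_on_pos_def by blast
  then show ?thesis unfolding poly_on_pos_def by (intro exI[of _ "P + Q"]) simp
qed

lemma poly_on_pos_cong: "poly_on_pos g \<Longrightarrow> (\<And>n. n \<ge> 1 \<Longrightarrow> f n = g n) \<Longrightarrow> poly_on_pos f"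
  unfolding poly_on_pos_def by simp

lemma poly_on_pos_from_differences:
  assumes rec: "\<And>n. n \<ge> 1 \<Longrightarrow> f (Suc n) = f n + g n" and g: "poly_on_pos g"
  shows "poly_on_pos f"
proof -
  obtain R :: "rat poly" where R: "\<And>n. n \<ge> 1 \<Longrightarrow> poly R (of_nat n) = of_nat (g n)"
    using g unfolding poly_on_pos_def by blast
  obtain T where T: "\<And>x. poly T (x + 1) = poly T x + poly R x" using ex_poly_antidifference by blast
  define c where "c = of_nat (f 1) - poly T 1"
  have "poly (T + [:c:]) (of_nat n) = of_nat (f n)" if "n \<ge> 1" for n
    using that
  proof (induction n rule: dec_induct)
    case (step n)
    then show ?case using rec[OF step.hyps(1)] R[OF step.hyps(1)] T[of "of_nat n"]
      by (simp add: algebra_simps)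
  qed (simp add: c_def)
  then show ?thesis unfolding poly_on_pos_def by blast
qed

lemma card_up_set_less:
  assumes fin: "finite V1" "finite V2" and x: "x \<in> SPi V1 V2" and y: "y \<in> SPi V1 V2" "sp_le x y" "y \<noteq> x"
  shows "card {z \<in> SPi V1 V2. sp_le y z} < card {z \<in> SPi V1 V2. sp_le x z}"
proof (rule psubset_card_mono)
  have le_iff: "sp_le a b \<longleftrightarrow> sp_le_alt a b" if "a \<in> SPi V1 V2" "b \<in> SPi V1 V2" for a b
    using sp_le_iff_alt that by (simp add: mem_SPi_iff)
  have "{z \<in> SPi V1 V2. sp_le y z} \<subseteq> {z \<in> SPi V1 V2. sp_le x z}"
    using le_iff x y sp_le_alt_trans by blast
  moreover have "\<not> sp_le y x"
    using le_iff x y sp_le_alt_antisym by (metis mem_SPi_iff)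
  moreover have "sp_le x x" using le_iff[OF x x] sp_le_alt_refl by simp
  ultimately show "{z \<in> SPi V1 V2. sp_le y z} \<subset> {z \<in> SPi V1 V2. sp_le x z}"
    using x by auto
qed (use finite_SPi[OF fin] in simp)

text \<open>By induction on the up-set of x: a chain from x either repeats x or continues from a
  strictly larger element, so the counts satisfy a difference equation in k.\<close>

lemma poly_on_pos_card_chains_from:
  assumes fin: "finite V1" "finite V2"
  shows "poly_on_pos (\<lambda>k. card (chains_from (SPi V1 V2) x k))"
proof (induction "card {y \<in> SPi V1 V2. sp_le x y}" arbitrary: x rule: less_induct)
  case less
  let ?S = "SPi V1 V2"
  show ?case
  proof (cases "x \<in> ?S")
    case False
    then show ?thesis using chains_from_empty[OF False] unfolding poly_on_pos_def
      by (intro exI[of _ 0]) simp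
  next
    case True
    let ?U = "{y \<in> ?S. sp_le x y} - {x}"
    have x: "x \<in> {y \<in> ?S. sp_le x y}"
      using True sp_le_iff_alt[of V1 V2 x x] sp_le_alt_refl by (simp add: mem_SPi_iff)
    have "card (chains_from ?S x (Suc k)) = card (chains_from ?S x k) + (\<Sum>y\<in>?U. card (chains_from ?S y k))"
      if "k \<ge> 1" for k
      unfolding card_chains_from_Suc[OF True that finite_SPi[OF fin]]
      by (rule sum.remove[OF _ x]) (use finite_SPi[OF fin] in simp)
    moreover have "poly_on_pos (\<lambda>k. \<Sum>y\<in>?U. card (chains_from ?S y k))"
      using less.hyps card_up_set_less[OF fin True] finite_SPi[OF fin] by (intro poly_on_pos_sum) auto
    ultimately show ?thesis by (rule poly_on_pos_from_differences)
  qed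
qed

lemma poly_on_pos_cnt: "poly_on_pos (cnt p q)"
proof (rule poly_on_pos_cong)
  let ?S = "SPi (V1c p) (V2c p q)"
  show "poly_on_pos (\<lambda>n. \<Sum>x\<in>?S. card (chains_from ?S x n))"
    using poly_on_pos_card_chains_from[OF finite_V1c finite_V2c] finite_SPi[OF finite_V1c finite_V2c]
    by (intro poly_on_pos_sum)
  show "cnt p q n = (\<Sum>x\<in>?S. card (chains_from ?S x n))" if "n \<ge> 1" for n
    unfolding cnt_def using card_multichains_in[OF that finite_SPi[OF finite_V1c finite_V2c]] .
qed

lemma poly_on_pos_cnt_bullet: "poly_on_pos (cnt_bullet p q)"
  unfolding cnt_bullet_eq_sum_single_block_chains[abs_def] single_block_chains_def
  using poly_on_pos_card_chains_from[OF finite_V1c finite_V2c] finite_V1c by (intro poly_on_pos_sum)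

lemma poly_on_pos_cnt_cross: "poly_on_pos (cnt_cross p q)"
  unfolding cnt_cross_eq_single_block_chains[abs_def] single_block_chains_def
  by (rule poly_on_pos_card_chains_from[OF finite_V1c finite_V2c])

lemma poly_on_pos_cnt_ell: "poly_on_pos (cnt_ell p q)"
proof (rule poly_on_pos_cong)
  show "poly_on_pos (\<lambda>n. cnt_bullet p q (Suc n) + cnt_cross p q (Suc n))"
    by (intro poly_on_pos_add poly_on_pos_Suc poly_on_pos_cnt_bullet poly_on_pos_cnt_cross)
qed (rule cnt_ell_eq)

lemma poly_ext_eq_poly:
  assumes P: "\<forall>n\<ge>1. poly P (of_nat n) = of_nat (g n)"
  shows "poly_ext g k = poly P (of_int k)"
  unfolding poly_ext_def
proof (rule the_equality)
  fix v :: rat assume "\<exists>P' :: rat poly. (\<forall>n\<ge>1. poly P' (of_nat n) = of_nat (g n)) \<and> v = poly P' (of_int k)"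
  then obtain P' :: "rat poly" where P': "\<forall>n\<ge>1. poly P' (of_nat n) = of_nat (g n)" "v = poly P' (of_int k)"
    by blast
  have "P' = P" using P P'(1) by (intro poly_eqI_of_nat_ge[of 1]) simp
  then show "v = poly P (of_int k)" using P'(2) by simp
qed (use P in blast)

lemma poly_on_posE:
  assumes "poly_on_pos g"
  obtains P :: "rat poly" where "\<And>k. poly_ext g k = poly P (of_int k)"
    and "\<And>n. n \<ge> 1 \<Longrightarrow> poly P (of_nat n) = of_nat (g n)"
  using assms poly_ext_eq_poly unfolding poly_on_pos_def by blast

lemma poly_ext_of_nat: "poly_on_pos g \<Longrightarrow> n \<ge> 1 \<Longrightarrow> poly_ext g (int n) = of_nat (g n)"
  by (elim poly_on_posE) simp

definition int_polyfun :: "(int \<Rightarrow> rat) \<Rightarrow> bool" where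
  "int_polyfun f \<longleftrightarrow> (\<exists>P. \<forall>k. f k = poly P (of_int k))"

lemma int_polyfun_const: "int_polyfun (\<lambda>k. c)"
  unfolding int_polyfun_def by (rule exI[of _ "[:c:]"]) simp

lemma int_polyfun_add: "int_polyfun f \<Longrightarrow> int_polyfun g \<Longrightarrow> int_polyfun (\<lambda>k. f k + g k)"
  unfolding int_polyfun_def by (metis poly_add)

lemma int_polyfun_diff: "int_polyfun f \<Longrightarrow> int_polyfun g \<Longrightarrow> int_polyfun (\<lambda>k. f k - g k)"
  unfolding int_polyfun_def by (metis poly_diff)

lemma int_polyfun_mult: "int_polyfun f \<Longrightarrow> int_polyfun g \<Longrightarrow> int_polyfun (\<lambda>k. f k * g k)"
  unfolding int_polyfun_def by (metis poly_mult)

lemma int_polyfun_sum: "finite A \<Longrightarrow> (\<And>a. a \<in> A \<Longrightarrow> int_polyfun (f a)) \<Longrightarrow> int_polyfun (\<lambda>k. \<Sum>a\<in>A. f a k)"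
proof (induction A rule: finite_induct)
  case empty then show ?case using int_polyfun_const[of 0] by simp
next
  case (insert a A)
  have "int_polyfun (\<lambda>k. f a k + (\<Sum>a\<in>A. f a k))" using insert by (intro int_polyfun_add) auto
  then show ?case using insert by simp
qed

lemma int_polyfun_shift: "int_polyfun f \<Longrightarrow> int_polyfun (\<lambda>k. f (k - 1))"
proof -
  assume "int_polyfun f"
  then obtain P where P: "\<And>k. f k = poly P (of_int k)" unfolding int_polyfun_def by blast
  have "f (k - 1) = poly (pcompose P [:-1, 1:]) (of_int k)" for k
    using P[of "k - 1"] by (simp add: poly_pcompose)
  then show ?thesis unfolding int_polyfun_def by blast
qed

lemma int_polyfun_eq_0:
  assumes "int_polyfun f" and zero: "\<And>k. k \<ge> 2 \<Longrightarrow> f k = 0"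
  shows "f k = 0"
proof -
  obtain P where P: "\<And>k. f k = poly P (of_int k)" using assms(1) unfolding int_polyfun_def by blast
  have "P = 0" using zero[of "int _"] P[of "int _"] by (intro poly_eqI_of_nat_ge[of 2]) auto
  then show ?thesis using P by simp
qed

definition coeffwise_polyfun :: "(int \<Rightarrow> bser) \<Rightarrow> bool" where
  "coeffwise_polyfun F \<longleftrightarrow> (\<forall>p q. int_polyfun (\<lambda>k. F k p q))"

lemma coeffwise_polyfun_bmul:
  "coeffwise_polyfun F \<Longrightarrow> coeffwise_polyfun G \<Longrightarrow> coeffwise_polyfun (\<lambda>k. bmul (F k) (G k))"
  unfolding coeffwise_polyfun_def bmul_def by (auto intro!: int_polyfun_sum int_polyfun_mult)

lemma coeffwise_polyfun_badd:
  "coeffwise_polyfun F \<Longrightarrow> coeffwise_polyfun G \<Longrightarrow> coeffwise_polyfun (\<lambda>k. badd (F k) (G k))"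
  unfolding coeffwise_polyfun_def badd_def by (auto intro!: int_polyfun_add)

lemma coeffwise_polyfun_bsub:
  "coeffwise_polyfun F \<Longrightarrow> coeffwise_polyfun G \<Longrightarrow> coeffwise_polyfun (\<lambda>k. bsub (F k) (G k))"
  unfolding coeffwise_polyfun_def bsub_def by (auto intro!: int_polyfun_diff)

lemma coeffwise_polyfun_bone: "coeffwise_polyfun (\<lambda>k. bone)"
  unfolding coeffwise_polyfun_def by (simp add: int_polyfun_const)

lemma coeffwise_polyfun_bpow: "coeffwise_polyfun F \<Longrightarrow> coeffwise_polyfun (\<lambda>k. bpow (F k) n)"
proof (induction n)
  case 0 then show ?case using coeffwise_polyfun_bone by simp
next
  case (Suc n) then show ?case using coeffwise_polyfun_bmul[OF Suc.prems Suc.IH[OF Suc.prems]] by simp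
qed

lemma coeffwise_polyfun_bexp: "coeffwise_polyfun F \<Longrightarrow> coeffwise_polyfun (\<lambda>k. bexp (F k))"
proof -
  assume F: "coeffwise_polyfun F"
  show ?thesis unfolding coeffwise_polyfun_def bexp_def
  proof (intro allI)
    fix p q
    show "int_polyfun (\<lambda>k. \<Sum>n\<le>p + q. bpow (F k) n p q / fact n)"
    proof (rule int_polyfun_sum)
      fix n
      have "int_polyfun (\<lambda>k. bpow (F k) n p q * (1 / fact n))"
        using coeffwise_polyfun_bpow[OF F, of n] int_polyfun_const unfolding coeffwise_polyfun_def
          by (intro int_polyfun_mult) auto
      then show "int_polyfun (\<lambda>k. bpow (F k) n p q / fact n)" by simp
    qed simp
  qed
qed

lemma coeffwise_polyfun_shift: "coeffwise_polyfun F \<Longrightarrow> coeffwise_polyfun (\<lambda>k. F (k - 1))"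
  unfolding coeffwise_polyfun_def using int_polyfun_shift by blast

lemma coeffwise_polyfun_egf_poly_ext:
  assumes "\<And>p q. poly_on_pos (g p q)"
  shows "coeffwise_polyfun (\<lambda>k. egf (\<lambda>p q. poly_ext (g p q) k))"
  unfolding coeffwise_polyfun_def
proof (intro allI)
  fix p q
  obtain P :: "rat poly" where P: "\<And>k. poly_ext (g p q) k = poly P (of_int k)"
    using poly_on_posE[OF assms[of p q]] by blast
  show "int_polyfun (\<lambda>k. egf (\<lambda>p q. poly_ext (g p q) k) p q)"
  proof (cases "p = 0 \<and> q = 0")
    case True then show ?thesis unfolding egf_def using int_polyfun_const[of 0] by simp
  next
    case False
    have i: "int_polyfun (\<lambda>k. poly_ext (g p q) k * (1 / (fact p * fact q)))"
      by (rule int_polyfun_mult) (use P int_polyfun_const in \<open>auto simp: int_polyfun_def\<close>)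
    have F: "(p = 0 \<and> q = 0) = False" using False by simp
    have e: "\<And>k. egf (\<lambda>p q. poly_ext (g p q) k) p q = poly_ext (g p q) k * (1 / (fact p * fact q))"
      unfolding egf_def F if_False by simp
    show ?thesis unfolding e by (rule i)
  qed
qed

section \<open>Extension to all integers k\<close>

lemma coeffwise_polyfun_eqI:
  assumes "coeffwise_polyfun F" "coeffwise_polyfun G" and "\<And>k. k \<ge> 2 \<Longrightarrow> F k = G k"
  shows "F k = G k"
proof (intro ext)
  fix p q
  have "int_polyfun (\<lambda>k. F k p q - G k p q)"
    using assms(1,2) unfolding coeffwise_polyfun_def by (intro int_polyfun_diff) auto
  then show "F k p q = G k p q" using int_polyfun_eq_0[of "\<lambda>k. F k p q - G k p q"] assms(3) by simp
qed

lemma coeffwise_polyfun_Cbullet: "coeffwise_polyfun Cbullet"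
  using coeffwise_polyfun_egf_poly_ext[of "\<lambda>p q. cnt_bullet p q"] poly_on_pos_cnt_bullet
  unfolding Cbullet_def[abs_def] by simp

lemma coeffwise_polyfun_Ccross: "coeffwise_polyfun Ccross"
  using coeffwise_polyfun_egf_poly_ext[of "\<lambda>p q. cnt_cross p q"] poly_on_pos_cnt_cross
  unfolding Ccross_def[abs_def] by simp

lemma coeffwise_polyfun_Cser: "coeffwise_polyfun Cser"
  using coeffwise_polyfun_egf_poly_ext[of "\<lambda>p q. cnt p q"] poly_on_pos_cnt
  unfolding Cser_def[abs_def] by simp

lemma coeffwise_polyfun_Cell: "coeffwise_polyfun Cell"
  using coeffwise_polyfun_egf_poly_ext[of "\<lambda>p q. cnt_ell p q"] poly_on_pos_cnt_ell
  unfolding Cell_def[abs_def] by simp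

lemma Cbullet_of_nat: "n \<ge> 1 \<Longrightarrow> Cbullet (int n) = egf (nbullet n)"
  unfolding Cbullet_def nbullet_def[abs_def] by (simp add: poly_ext_of_nat poly_on_pos_cnt_bullet)

lemma Ccross_of_nat: "n \<ge> 1 \<Longrightarrow> Ccross (int n) = egf (ncross n)"
  unfolding Ccross_def ncross_def[abs_def] by (simp add: poly_ext_of_nat poly_on_pos_cnt_cross)

lemma Cser_of_nat: "n \<ge> 1 \<Longrightarrow> Cser (int n) = egf (\<lambda>p q. of_nat (cnt p q n))"
  unfolding Cser_def by (simp add: poly_ext_of_nat poly_on_pos_cnt)

lemma Cell_of_nat: "n \<ge> 1 \<Longrightarrow> Cell (int n) = egf (\<lambda>p q. of_nat (cnt_ell p q n))"
  unfolding Cell_def by (simp add: poly_ext_of_nat poly_on_pos_cnt_ell)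

lemma egf_eqI:
  assumes "F 0 0 = 0" and "\<And>p q. \<not> (p = 0 \<and> q = 0) \<Longrightarrow> a p q = fact p * fact q * F p q"
  shows "egf a = F"
  using assms unfolding egf_def by (intro ext) auto

lemma egf_nmin: "egf (nmin k) = badd (egf (nbullet k)) (egf (ncross k))"
  unfolding badd_def egf_def nmin_def by (intro ext) (simp add: add_divide_distrib)

lemma egf_nbullet_Suc:
  "k \<ge> 1 \<Longrightarrow> egf (nbullet (Suc k)) = bmul (egf (nbullet k)) (bexp (badd (egf (nbullet k)) (egf (ncross k))))"
  unfolding egf_nmin[symmetric]
  by (rule egf_eqI) (simp_all add: bmul_0_0 egf_0_0 nbullet_def cnt_bullet_Suc_eq_fact_mult_bmul)

lemma egf_ncross_Suc:
  "k \<ge> 1 \<Longrightarrow> egf (ncross (Suc k)) = bmul (bexp (egf (nbullet k))) (bsub (bexp (egf (ncross k))) bone)"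
  by (rule egf_eqI) (simp_all add: bmul_0_0 bsub_def bone_def bexp_0_0 ncross_def cnt_cross_Suc_eq_fact_mult_bmul)

lemma egf_cnt:
  "k \<ge> 1 \<Longrightarrow> egf (\<lambda>p q. of_nat (cnt p q k)) = bsub (bexp (badd (egf (nbullet k)) (egf (ncross k)))) bone"
  unfolding egf_nmin[symmetric]
  by (rule egf_eqI) (simp_all add: bsub_def bone_def bexp_0_0 cnt_eq_fact_mult_bexp)

lemma egf_cnt_ell:
  "k \<ge> 1 \<Longrightarrow> egf (\<lambda>p q. of_nat (cnt_ell p q k)) = badd (egf (nbullet (Suc k))) (egf (ncross (Suc k)))"
  unfolding egf_nmin[symmetric] nmin_def nbullet_def ncross_def by (simp add: cnt_ell_eq)

lemma proposition2p6_of_nat: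
  assumes "n \<ge> 1"
  shows "Cbullet (int (Suc n)) = bmul (Cbullet (int n)) (bexp (badd (Cbullet (int n)) (Ccross (int n))))
       \<and> Ccross (int (Suc n)) = bmul (bexp (Cbullet (int n))) (bsub (bexp (Ccross (int n))) bone)
       \<and> Cser (int (Suc n)) = bsub (bexp (badd (Cbullet (int (Suc n))) (Ccross (int (Suc n))))) bone
       \<and> Cell (int n) = badd (Cbullet (int (Suc n))) (Ccross (int (Suc n)))"
proof -
  have "Suc n \<ge> 1" by simp
  note of_nat = Cbullet_of_nat[OF assms] Ccross_of_nat[OF assms] Cell_of_nat[OF assms]
    Cbullet_of_nat[OF this] Ccross_of_nat[OF this] Cser_of_nat[OF this]
  show ?thesis
    unfolding of_nat egf_nbullet_Suc[OF assms] egf_ncross_Suc[OF assms] egf_cnt[OF \<open>Suc n \<ge> 1\<close>]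
      egf_cnt_ell[OF assms]
    by simp
qed

theorem proposition2p6:
  fixes k :: int
  shows "Cbullet k = bmul (Cbullet (k - 1)) (bexp (badd (Cbullet (k - 1)) (Ccross (k - 1))))
       \<and> Ccross k = bmul (bexp (Cbullet (k - 1))) (bsub (bexp (Ccross (k - 1))) bone)
       \<and> Cser k = bsub (bexp (badd (Cbullet k) (Ccross k))) bone
       \<and> Cell (k - 1) = badd (Cbullet k) (Ccross k)"
proof -
  have from_2: "Cbullet k = bmul (Cbullet (k - 1)) (bexp (badd (Cbullet (k - 1)) (Ccross (k - 1))))
       \<and> Ccross k = bmul (bexp (Cbullet (k - 1))) (bsub (bexp (Ccross (k - 1))) bone)
       \<and> Cser k = bsub (bexp (badd (Cbullet k) (Ccross k))) bone
       \<and> Cell (k - 1) = badd (Cbullet k) (Ccross k)" if "k \<ge> 2" for k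
  proof -
    define n where "n = nat k - 1"
    have "n \<ge> 1" "k = int (Suc n)" using that unfolding n_def by auto
    then show ?thesis using proposition2p6_of_nat[of n] by simp
  qed
  note polys = coeffwise_polyfun_Cbullet coeffwise_polyfun_Ccross coeffwise_polyfun_Cser coeffwise_polyfun_Cell
    coeffwise_polyfun_shift[OF coeffwise_polyfun_Cbullet] coeffwise_polyfun_shift[OF coeffwise_polyfun_Ccross]
    coeffwise_polyfun_shift[OF coeffwise_polyfun_Cell]
  note closure = coeffwise_polyfun_bmul coeffwise_polyfun_badd coeffwise_polyfun_bsub coeffwise_polyfun_bexp
    coeffwise_polyfun_bone
  show ?thesis
    by (intro conjI; rule coeffwise_polyfun_eqI[where k = k]) (use from_2 in \<open>auto intro!: polys closure\<close>)
qed

end
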